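(* Let $\mathbf m,\mathbf n\in\Xi$ with $\mathbf m\ge\mathbf n$. The following are equivalent: (i) the inequality $\mathbf m\ge\mathbf n$ is anodyne; (ii) $|\mathbf m|=|\mathbf n|$, where $\mathbf m,\mathbf n$ are regarded as $W$-orbits (subsets) of $\mathcal C\times\mathcal C$; (iii) the map $\pi_{\mathbf m,\mathbf n}:\mathbf m\to\mathbf n$ is a bijection.
   Context: Let $\mathfrak h_\mathbb R$ be a finite-dimensional real Euclidean vector space, $W\subset O(\mathfrak h_\mathbb R)$ a finite reflection group, $\mathcal H$ its set of reflection hyperplanes, $\mathcal C$ the set of faces of $\mathcal H$ (relatively open cells cut out by $\mathcal H$), partially ordered by $A\le B$ iff $A\subset\overline B$. Fix a chamber $C^+$, $S$ the reflections in its walls, $W_I=\langle I\rangle$, $C^+_I$ the face of $\overline{C^+}$ open in $\bigcap_{s\in I}H_s$; $\bigsqcup_I W/W_I\cong\mathcal C$ via $wW_I\mapsto w(C^+_I)$, and $A_{\mathbf c}$ is the face of the coset $\mathbf c$. Let $\Xi=W\backslash(\mathcal C\times\mathcal C)$ with $\Xi(I,J)=W\backslash(W/W_I\times W/W_J)$, partially ordered by $\mathbf m\ge\mathbf n$ iff there are $(A,B)\in\mathbf m$, $(A',B')\in\mathbf n$ with $A\ge A'$, $B\ge B'$. If $\mathbf m\in\Xi(I_1,J_1)$, $\mathbf n\in\Xi(I_2,J_2)$ and $\mathbf m\ge\mathbf n$, then $I_1\subset I_2$, $J_1\subset J_2$ and the projection $W/W_{I_1}\times W/W_{J_1}\to W/W_{I_2}\times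 W/W_{J_2}$ restricts to a surjective $W$-map $\pi_{\mathbf m,\mathbf n}:\mathbf m\to\mathbf n$. Let $\mathfrak h=\mathfrak h_\mathbb R\oplus i\mathfrak h_\mathbb R$, $p:\mathfrak h\to W\backslash\mathfrak h$ the quotient, and $U_{\mathbf m}=p(iA_{\mathbf c}+A_{\mathbf d})$ for $\mathbf m=W(\mathbf c,\mathbf d)$. Let $\mathcal S^{(0)}$ be the stratification of $W\backslash\mathfrak h$ whose strata are the images under $p$ of the generic parts of complexified flats of $\mathcal H$ (for a flat $L$: points of $L\otimes\mathbb C$ not in any strictly smaller complexified flat). An inequality $\mathbf m\ge\mathbf n$ is called anodyne if $U_{\mathbf m}$ and $U_{\mathbf n}$ lie in the same stratum of $\mathcal S^{(0)}$. *)

theory Defs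
  imports "HOL-Analysis.Analysis"
begin

definition is_reflection_along :: "'a::euclidean_space \<Rightarrow> ('a \<Rightarrow> 'a) \<Rightarrow> bool" where
  "is_reflection_along v s \<longleftrightarrow> v \<noteq> 0 \<and> (\<forall>x. s x = x - (2 * (x \<bullet> v) / (v \<bullet> v)) *\<^sub>R v)"

definition is_reflection :: "('a::euclidean_space \<Rightarrow> 'a) \<Rightarrow> bool" where
  "is_reflection s \<longleftrightarrow> (\<exists>v. is_reflection_along v s)"

inductive_set gen_group :: "('a \<Rightarrow> 'a) set \<Rightarrow> ('a \<Rightarrow> 'a) set" for R where
  gen_id: "id \<in> gen_group R"
| gen_step: "s \<in> R \<Longrightarrow> g \<in> gen_group R \<Longrightarrow> s \<circ> g \<in> gen_group R"

definition finite_refl_group :: "('a::euclidean_space \<Rightarrow> 'a) set \<Rightarrow> bool" where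
  "finite_refl_group W \<longleftrightarrow> finite W \<and> W = gen_group {s \<in> W. is_reflection s}"

definition hyps :: "('a::euclidean_space \<Rightarrow> 'a) set \<Rightarrow> 'a set set" where
  "hyps W = {{x. x \<bullet> v = 0} | v. \<exists>s\<in>W. is_reflection_along v s}"

definition same_face :: "('a::euclidean_space \<Rightarrow> 'a) set \<Rightarrow> 'a \<Rightarrow> 'a \<Rightarrow> bool" where
  "same_face W x y \<longleftrightarrow> (\<forall>v. (\<exists>s\<in>W. is_reflection_along v s) \<longrightarrow> sgn (x \<bullet> v) = sgn (y \<bullet> v))"

definition faces :: "('a::euclidean_space \<Rightarrow> 'a) set \<Rightarrow> 'a set set" where
  "faces W = {{y. same_face W x y} | x. True}"

definition face_le :: "'a::euclidean_space set \<Rightarrow> 'a set \<Rightarrow> bool" where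
  "face_le A B \<longleftrightarrow> A \<subseteq> closure B"

definition pair_orbit :: "('a \<Rightarrow> 'a) set \<Rightarrow> 'a set \<times> 'a set \<Rightarrow> ('a set \<times> 'a set) set" where
  "pair_orbit W AB = (\<lambda>w. (w ` fst AB, w ` snd AB)) ` W"

definition Xi :: "('a::euclidean_space \<Rightarrow> 'a) set \<Rightarrow> ('a set \<times> 'a set) set set" where
  "Xi W = {pair_orbit W (A, B) | A B. A \<in> faces W \<and> B \<in> faces W}"

definition xi_ge :: "('a::euclidean_space \<Rightarrow> 'a) set \<Rightarrow> ('a set \<times> 'a set) set \<Rightarrow> ('a set \<times> 'a set) set \<Rightarrow> bool" where
  "xi_ge W m n \<longleftrightarrow> (\<exists>A B A' B'. (A, B) \<in> m \<and> (A', B') \<in> n \<and> face_le A' A \<and> face_le B' B)"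

text \<open>The projection pi_{m,n} : m \<rightarrow> n, sending (A,B) to the unique pair (A',B') in n
  with A' \<le> A and B' \<le> B (this is the map induced by W/W_I1 \<times> W/W_J1 \<rightarrow> W/W_I2 \<times> W/W_J2).\<close>
definition proj_xi :: "('a::euclidean_space set \<times> 'a set) set \<Rightarrow> 'a set \<times> 'a set \<Rightarrow> 'a set \<times> 'a set" where
  "proj_xi n AB = (THE q. q \<in> n \<and> face_le (fst q) (fst AB) \<and> face_le (snd q) (snd AB))"

text \<open>Complexification h = h_R + i h_R, represented as pairs (real part, imaginary part);
  W acts diagonally, and the quotient map p sends a point to its W-orbit.\<close>
definition quot :: "('a \<Rightarrow> 'a) set \<Rightarrow> 'a \<times> 'a \<Rightarrow> ('a \<times> 'a) set" where
  "quot W z = (\<lambda>w. (w (fst z), w (snd z))) ` W"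

text \<open>U_m = p(i A + B) for (A,B) a representative of m; i a + b = (b, a).\<close>
definition U_xi :: "('a \<Rightarrow> 'a) set \<Rightarrow> ('a set \<times> 'a set) set \<Rightarrow> ('a \<times> 'a) set set" where
  "U_xi W m = (let AB = (SOME q. q \<in> m) in quot W ` {(b, a) | a b. a \<in> fst AB \<and> b \<in> snd AB})"

text \<open>Flats: intersections of sets of reflection hyperplanes (the empty intersection is the
  whole space). Complexified flat of L is L \<times> L.\<close>
definition flats :: "('a::euclidean_space \<Rightarrow> 'a) set \<Rightarrow> 'a set set" where
  "flats W = {\<Inter> F | F. F \<subseteq> hyps W}"

definition generic_part :: "('a::euclidean_space \<Rightarrow> 'a) set \<Rightarrow> 'a set \<Rightarrow> ('a \<times> 'a) set" where
  "generic_part W L = {z \<in> L \<times> L. \<not> (\<exists>M\<in>flats W. M \<times> M \<subset> L \<times> L \<and> z \<in> M \<times> M)}"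

definition strata0 :: "('a::euclidean_space \<Rightarrow> 'a) set \<Rightarrow> ('a \<times> 'a) set set set" where
  "strata0 W = {quot W ` generic_part W L | L. L \<in> flats W}"

definition anodyne :: "('a::euclidean_space \<Rightarrow> 'a) set \<Rightarrow> ('a set \<times> 'a set) set \<Rightarrow> ('a set \<times> 'a set) set \<Rightarrow> bool" where
  "anodyne W m n \<longleftrightarrow> (\<exists>X\<in>strata0 W. U_xi W m \<subseteq> X \<and> U_xi W n \<subseteq> X)"

end

theory Submission
  imports Defs
begin

text \<open>
  Represent \<open>m\<close> by a pair of faces \<open>(A, B)\<close> and \<open>n\<close> by \<open>(A', B')\<close> with \<open>A' \<le> A\<close>, \<open>B' \<le> B\<close>. The closed chamber is a strict fundamental domain
  (proved via simple reflections and reduced words), so the stabiliser of a face fixes it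
  pointwise and \<open>\<pi>\<close> is the well defined map \<open>(w A, w B) \<mapsto> (w A', w B')\<close>. An element fixing two
  points fixes the smallest flat through them: a generic combination of the points lies on the
  same mirrors, and a point near it in its face is fixed as well. Hence the stabiliser of
  \<open>(A', B')\<close> lies in that of \<open>(A, B)\<close>, i.e. \<open>\<pi>\<close> is injective, iff \<open>A \<union> B\<close> and \<open>A' \<union> B'\<close> span the
  same flat. Finally \<open>U\<^sub>m\<close> lies in the stratum of the \<open>W\<close>-translates of the flat spanned by \<open>A \<union> B\<close>;
  that flat contains the one spanned by \<open>A' \<union> B'\<close>, and a linear isometry cannot map a subspace onto
  a proper subspace of it, so \<open>m \<ge> n\<close> is anodyne iff the two flats coincide. As \<open>\<pi>\<close> is
  surjective between finite sets, it is injective iff \<open>|m| = |n|\<close>.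
\<close>

definition reflect :: "'a::real_inner \<Rightarrow> 'a \<Rightarrow> 'a" where
  "reflect v x = x - (2 * (x \<bullet> v) / (v \<bullet> v)) *\<^sub>R v"

lemma is_reflection_along_iff: "is_reflection_along v s \<longleftrightarrow> v \<noteq> 0 \<and> s = reflect v"
  unfolding is_reflection_along_def reflect_def by auto

lemma reflect_reflect: "v \<noteq> 0 \<Longrightarrow> reflect v (reflect v x) = x"
  unfolding reflect_def by (simp add: inner_diff_left field_simps)

lemma linear_reflect: "linear (reflect v)"
  unfolding reflect_def
  by (rule linearI) (simp_all add: inner_add_left algebra_simps add_divide_distrib)

lemma inner_reflect_reflect: "v \<noteq> 0 \<Longrightarrow> reflect v x \<bullet> reflect v y = x \<bullet> y"
  unfolding reflect_def by (simp add: inner_diff_left inner_diff_right field_simps inner_commute)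

lemma reflect_self: "reflect v v = - v"
  unfolding reflect_def by (cases "v = 0") (auto simp: algebra_simps scaleR_2)

lemma reflect_fixed_iff: "v \<noteq> 0 \<Longrightarrow> reflect v x = x \<longleftrightarrow> x \<bullet> v = 0"
  unfolding reflect_def by simp

lemma reflect_scaleR: "k \<noteq> 0 \<Longrightarrow> reflect (k *\<^sub>R v) = reflect v"
  unfolding reflect_def by (auto simp: fun_eq_iff field_simps)

lemma reflect_eq_imp_parallel:
  assumes "u \<noteq> 0" "v \<noteq> 0" "reflect u = reflect v"
  shows "\<exists>k. k \<noteq> 0 \<and> u = k *\<^sub>R v"
proof -
  have "reflect v u = - u" using assms(3) reflect_self[of u] by metis
  hence "2 *\<^sub>R u = (2 * (u \<bullet> v) / (v \<bullet> v)) *\<^sub>R v"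
    unfolding reflect_def by (simp add: algebra_simps scaleR_2)
  hence "(1/2) *\<^sub>R (2 *\<^sub>R u) = (1/2) *\<^sub>R ((2 * (u \<bullet> v) / (v \<bullet> v)) *\<^sub>R v)" by simp
  hence "u = ((u \<bullet> v) / (v \<bullet> v)) *\<^sub>R v" by simp
  thus ?thesis using assms(1) by (metis scale_zero_left)
qed

lemma gen_group_generator: "s \<in> R \<Longrightarrow> s \<in> gen_group R"
  using gen_group.gen_step[OF _ gen_group.gen_id, of s R] by simp

lemma gen_group_comp:
  assumes "g \<in> gen_group R" "h \<in> gen_group R"
  shows "g \<circ> h \<in> gen_group R"
  using assms(1)
proof induction
  case gen_id
  thus ?case using assms(2) by simp
next
  case (gen_step s g)
  thus ?case using gen_group.gen_step by (metis comp_assoc)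
qed

lemma gen_group_least:
  assumes "R \<subseteq> G" "id \<in> G" "\<And>a b. a \<in> G \<Longrightarrow> b \<in> G \<Longrightarrow> a \<circ> b \<in> G"
  shows "gen_group R \<subseteq> G"
proof
  fix g assume "g \<in> gen_group R"
  thus "g \<in> G" by induction (use assms in blast)+
qed

lemma gen_group_inverse:
  assumes "\<And>s. s \<in> R \<Longrightarrow> s \<circ> s = id" "g \<in> gen_group R"
  shows "\<exists>h\<in>gen_group R. h \<circ> g = id \<and> g \<circ> h = id"
  using assms(2)
proof induction
  case gen_id
  show ?case by (rule bexI[of _ id]) (auto intro: gen_group.gen_id)
next
  case (gen_step s g)
  then obtain h where h: "h \<in> gen_group R" "h \<circ> g = id" "g \<circ> h = id" by blast
  have "h \<circ> s \<in> gen_group R"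
    using gen_group_comp h(1) gen_group_generator gen_step(1) by blast
  moreover have "(h \<circ> s) \<circ> (s \<circ> g) = h \<circ> ((s \<circ> s) \<circ> g)" "(s \<circ> g) \<circ> (h \<circ> s) = s \<circ> ((g \<circ> h) \<circ> s)"
    by (simp_all add: comp_assoc)
  ultimately have "h \<circ> s \<in> gen_group R \<and> (h \<circ> s) \<circ> (s \<circ> g) = id \<and> (s \<circ> g) \<circ> (h \<circ> s) = id"
    using assms(1)[OF gen_step(1)] h(2,3) by simp
  thus ?case by blast
qed

fun compose_list :: "('b \<Rightarrow> 'b) list \<Rightarrow> 'b \<Rightarrow> 'b" where
  "compose_list [] = id"
| "compose_list (f # fs) = f \<circ> compose_list fs"

lemma gen_group_iff_word: "g \<in> gen_group R \<longleftrightarrow> (\<exists>ws. set ws \<subseteq> R \<and> g = compose_list ws)"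
proof
  assume "g \<in> gen_group R"
  thus "\<exists>ws. set ws \<subseteq> R \<and> g = compose_list ws"
  proof induction
    case gen_id
    show ?case by (rule exI[of _ "[]"]) simp
  next
    case (gen_step s g)
    then obtain ws where "set ws \<subseteq> R" "g = compose_list ws" by blast
    thus ?case using gen_step(1) by (intro exI[of _ "s # ws"]) simp
  qed
next
  assume "\<exists>ws. set ws \<subseteq> R \<and> g = compose_list ws"
  then obtain ws where "set ws \<subseteq> R" "g = compose_list ws" by blast
  moreover have "compose_list ws \<in> gen_group R" if "set ws \<subseteq> R" for ws
    using that by (induction ws) (simp_all add: gen_group.gen_id gen_group.gen_step)
  ultimately show "g \<in> gen_group R" by blast
qed

lemma subspace_point_off_hyperplanes:
  fixes u :: "'i \<Rightarrow> 'a::real_inner"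
  assumes "subspace S" "finite T" "\<forall>i\<in>T. \<exists>z\<in>S. z \<bullet> u i \<noteq> 0"
  shows "\<exists>y\<in>S. \<forall>i\<in>T. y \<bullet> u i \<noteq> 0"
  using assms(2,3)
proof (induction T rule: finite_induct)
  case empty
  thus ?case using subspace_0[OF assms(1)] by blast
next
  case (insert i0 T)
  then obtain y where y: "y \<in> S" "\<forall>i\<in>T. y \<bullet> u i \<noteq> 0" by auto
  obtain z where z: "z \<in> S" "z \<bullet> u i0 \<noteq> 0" using insert by auto
  have "finite ((\<lambda>i. - (y \<bullet> u i) / (z \<bullet> u i)) ` insert i0 T)" using insert(1) by simp
  then obtain l :: real where l: "l \<notin> (\<lambda>i. - (y \<bullet> u i) / (z \<bullet> u i)) ` insert i0 T"
    using ex_new_if_finite[OF infinite_UNIV_char_0] by blast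
  have "y + l *\<^sub>R z \<in> S" using y z assms(1) by (simp add: subspace_add subspace_scale)
  moreover have "(y + l *\<^sub>R z) \<bullet> u i \<noteq> 0" if i: "i \<in> insert i0 T" for i
  proof (cases "z \<bullet> u i = 0")
    case True
    thus ?thesis using y z i by (auto simp: inner_add_left)
  next
    case False
    show ?thesis
    proof
      assume "(y + l *\<^sub>R z) \<bullet> u i = 0"
      hence "l = - (y \<bullet> u i) / (z \<bullet> u i)" using False by (simp add: inner_add_left field_simps)
      thus False using l i by blast
    qed
  qed
  ultimately show ?case by blast
qed

lemma small_perturbation_keeps_signs:
  fixes f :: "'i \<Rightarrow> 'a::real_inner"
  assumes "finite T" "\<forall>i\<in>T. q \<bullet> f i \<noteq> 0"
  shows "\<exists>\<epsilon>>0. \<forall>\<delta>. \<bar>\<delta>\<bar> < \<epsilon> \<longrightarrow> (\<forall>i\<in>T. sgn ((q + \<delta> *\<^sub>R u) \<bullet> f i) = sgn (q \<bullet> f i))"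
proof -
  have "\<forall>\<^sub>F \<delta> in nhds 0. \<bar>\<delta> * (u \<bullet> f i)\<bar> < \<bar>q \<bullet> f i\<bar>" if "i \<in> T" for i
    unfolding eventually_nhds_metric
  proof (intro exI conjI allI impI)
    let ?a = "\<bar>q \<bullet> f i\<bar>" and ?b = "\<bar>u \<bullet> f i\<bar>"
    show "?a / (?b + 1) > 0" using assms(2) that by simp
    fix \<delta> :: real assume "dist \<delta> 0 < ?a / (?b + 1)"
    hence "\<bar>\<delta>\<bar> * (?b + 1) < ?a" by (simp add: pos_less_divide_eq)
    thus "\<bar>\<delta> * (u \<bullet> f i)\<bar> < ?a" by (simp add: abs_mult algebra_simps)
  qed
  hence "\<forall>\<^sub>F \<delta> in nhds 0. \<forall>i\<in>T. \<bar>\<delta> * (u \<bullet> f i)\<bar> < \<bar>q \<bullet> f i\<bar>"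
    by (intro eventually_ball_finite[OF assms(1)] ballI)
  then obtain \<epsilon> where "\<epsilon> > 0" and small: "\<And>\<delta> i. \<bar>\<delta>\<bar> < \<epsilon> \<Longrightarrow> i \<in> T \<Longrightarrow> \<bar>\<delta> * (u \<bullet> f i)\<bar> < \<bar>q \<bullet> f i\<bar>"
    unfolding eventually_nhds_metric dist_real_def by auto
  moreover have "sgn ((q + \<delta> *\<^sub>R u) \<bullet> f i) = sgn (q \<bullet> f i)" if "\<bar>\<delta>\<bar> < \<epsilon>" "i \<in> T" for \<delta> i
    using small[OF that] by (auto simp: sgn_if inner_add_left)
  ultimately show ?thesis by blast
qed

lemma zero_less_mult_iff_sgn: "(0::real) < a * b \<longleftrightarrow> a \<noteq> 0 \<and> sgn b = sgn a"
  by (auto simp: zero_less_mult_iff sgn_if)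

lemma mult_less_0_iff_sgn: "(a::real) * b < 0 \<longleftrightarrow> a \<noteq> 0 \<and> sgn b = - sgn a"
  by (auto simp: mult_less_0_iff sgn_if)

lemma scaled_product_sign:
  fixes k a b :: real
  assumes "k \<noteq> 0"
  shows "(k * a) * (k * b) < 0 \<longleftrightarrow> a * b < 0" "0 \<le> (k * a) * (k * b) \<longleftrightarrow> 0 \<le> a * b"
proof -
  have eq: "(k * a) * (k * b) = (k * k) * (a * b)" by (simp add: algebra_simps)
  have pos: "k * k > 0" using assms not_real_square_gt_zero by blast
  have "c * x < 0 \<longleftrightarrow> x < 0" "0 \<le> c * x \<longleftrightarrow> 0 \<le> x" if "0 < c" for c x :: real
    using that by (auto simp: mult_less_0_iff zero_le_mult_iff)
  thus "(k * a) * (k * b) < 0 \<longleftrightarrow> a * b < 0" "0 \<le> (k * a) * (k * b) \<longleftrightarrow> 0 \<le> a * b"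
    unfolding eq using pos by blast+
qed

lemma segment_meets_hyperplane:
  fixes e y v :: "'a::real_inner"
  assumes "e \<bullet> v \<noteq> 0" "(y \<bullet> v) * (e \<bullet> v) \<le> 0"
  obtains l where "0 < l" "l \<le> 1" "(e + l *\<^sub>R (y - e)) \<bullet> v = 0"
proof -
  have "0 < a / (a - b) \<and> a / (a - b) \<le> 1 \<and> a - b \<noteq> 0" if "a \<noteq> 0" "b * a \<le> 0" for a b :: real
    using that by (cases "a > 0") (auto simp: mult_le_0_iff divide_le_eq_1 zero_less_divide_iff)
  note l = this[OF assms]
  have "(e + ((e \<bullet> v) / (e \<bullet> v - y \<bullet> v)) *\<^sub>R (y - e)) \<bullet> v = 0"
    using l by (simp add: inner_add_left inner_diff_left field_simps)
  thus thesis using that l by blast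
qed

lemma linear_inj_image_subspace_eq:
  fixes h :: "'a::euclidean_space \<Rightarrow> 'a"
  assumes "linear h" "inj h" "subspace S" "h ` S \<subseteq> S"
  shows "h ` S = S"
proof -
  have "dim (h ` S) = dim S" using dim_image_eq[OF assms(1)] assms(2) by (meson inj_on_subset subset_UNIV)
  thus ?thesis
    using subspace_dim_equal[OF real_vector.linear_subspace_image[OF assms(1,3)] assms(3,4)] by simp
qed

section \<open>Finite reflection groups\<close>

locale finite_reflection_group =
  fixes W :: "('a::euclidean_space \<Rightarrow> 'a) set"
  assumes finite_refl_group: "finite_refl_group W"
begin

definition Refl :: "('a \<Rightarrow> 'a) set" where
  "Refl = {s \<in> W. is_reflection s}"

text \<open>Only the line of \<open>root s\<close> is determined by \<open>s\<close>; every notion below is invariant under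
  rescaling it.\<close>
definition root :: "('a \<Rightarrow> 'a) \<Rightarrow> 'a" where
  "root s = (SOME v. is_reflection_along v s)"

lemma finite_W: "finite W"
  using finite_refl_group unfolding finite_refl_group_def by blast

lemma W_eq_gen_group: "W = gen_group Refl"
  using finite_refl_group unfolding finite_refl_group_def Refl_def by blast

lemma Refl_subset_W: "Refl \<subseteq> W"
  unfolding Refl_def by blast

lemma finite_Refl: "finite Refl"
  using finite_W Refl_subset_W finite_subset by blast

lemma is_reflection_along_root: "s \<in> Refl \<Longrightarrow> is_reflection_along (root s) s"
  unfolding Refl_def is_reflection_def root_def by (auto intro: someI_ex)

lemma root_nonzero: "s \<in> Refl \<Longrightarrow> root s \<noteq> 0"
  using is_reflection_along_root is_reflection_along_iff by blast

lemma reflect_root: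
  assumes "s \<in> Refl"
  shows "reflect (root s) = s"
proof -
  have "root s \<noteq> 0 \<and> s = reflect (root s)"
    using is_reflection_along_root[OF assms] is_reflection_along_iff by blast
  thus ?thesis by (elim conjE) (rule sym)
qed

lemma Refl_involution: "s \<in> Refl \<Longrightarrow> s (s x) = x"
  using reflect_reflect[OF root_nonzero, of s x] by (simp add: reflect_root)

lemma Refl_comp_self: "s \<in> Refl \<Longrightarrow> s \<circ> s = id"
  using Refl_involution by fastforce

lemma Refl_fixed_iff: "s \<in> Refl \<Longrightarrow> s x = x \<longleftrightarrow> x \<bullet> root s = 0"
  using reflect_fixed_iff[OF root_nonzero, of s x] by (simp add: reflect_root)

lemma linear_Refl: "s \<in> Refl \<Longrightarrow> linear s"
  using linear_reflect[of "root s"] by (simp add: reflect_root)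

lemma is_reflection_along_imp_Refl: "s \<in> W \<Longrightarrow> is_reflection_along v s \<Longrightarrow> s \<in> Refl"
  unfolding Refl_def is_reflection_def by blast

lemma root_unique:
  assumes "s \<in> Refl" "is_reflection_along v s"
  shows "\<exists>k. k \<noteq> 0 \<and> v = k *\<^sub>R root s"
proof -
  have "v \<noteq> 0" "s = reflect v" using assms(2) is_reflection_along_iff by auto
  hence "v \<noteq> 0" "reflect v = reflect (root s)" using reflect_root[OF assms(1)] by simp_all
  thus ?thesis using reflect_eq_imp_parallel root_nonzero[OF assms(1)] by blast
qed

lemma id_in_W: "id \<in> W"
  using W_eq_gen_group gen_group.gen_id by blast

lemma comp_in_W: "g \<in> W \<Longrightarrow> h \<in> W \<Longrightarrow> g \<circ> h \<in> W"
  using W_eq_gen_group gen_group_comp by blast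

lemma W_linear_isometry: "w \<in> W \<Longrightarrow> linear w \<and> (\<forall>x y. w x \<bullet> w y = x \<bullet> y)"
proof -
  assume "w \<in> W"
  hence "w \<in> gen_group Refl" using W_eq_gen_group by blast
  thus ?thesis
  proof induction
    case gen_id
    show ?case by (simp add: linear_id[unfolded id_def])
  next
    case (gen_step s g)
    hence "linear s" "\<forall>x y. s x \<bullet> s y = x \<bullet> y"
      using linear_Refl inner_reflect_reflect[OF root_nonzero] by (auto simp: reflect_root)
    thus ?case using gen_step linear_compose[of g s] by (simp add: o_def)
  qed
qed

lemma linear_W: "w \<in> W \<Longrightarrow> linear w"
  using W_linear_isometry by blast

lemma inner_W: "w \<in> W \<Longrightarrow> w x \<bullet> w y = x \<bullet> y"
  using W_linear_isometry by blast

lemma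
  assumes "w \<in> W"
  shows inv_in_W: "inv w \<in> W"
    and inv_W_apply [simp]: "inv w (w x) = x"
    and W_apply_inv [simp]: "w (inv w x) = x"
proof -
  obtain h where h: "h \<in> gen_group Refl" "h \<circ> w = id" "w \<circ> h = id"
    using gen_group_inverse[of Refl w] Refl_comp_self assms W_eq_gen_group by blast
  have "inv w = h" using inv_unique_comp h by metis
  thus "inv w \<in> W" using h(1) W_eq_gen_group by simp
  show "inv w (w x) = x" "w (inv w x) = x"
    using \<open>inv w = h\<close> h(2,3) by (metis comp_apply id_apply)+
qed

lemma bij_W: "w \<in> W \<Longrightarrow> bij w"
  by (rule o_bij[of "inv w"]) (simp_all add: fun_eq_iff)

lemma inv_inv_W: "w \<in> W \<Longrightarrow> inv (inv w) = w"
  by (simp add: bij_W inv_inv_eq)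

lemma inj_W: "w \<in> W \<Longrightarrow> inj w"
  by (simp add: bij_W bij_is_inj)

lemma inner_W_inv: "w \<in> W \<Longrightarrow> w x \<bullet> y = x \<bullet> inv w y"
  using inner_W[of w x "inv w y"] by simp

lemma image_inv_image_W [simp]: "w \<in> W \<Longrightarrow> w ` inv w ` X = X"
  by (simp add: image_comp comp_def)

lemma inv_image_image_W [simp]: "w \<in> W \<Longrightarrow> inv w ` w ` X = X"
  by (simp add: image_comp comp_def)

definition conjugate :: "('a \<Rightarrow> 'a) \<Rightarrow> ('a \<Rightarrow> 'a) \<Rightarrow> 'a \<Rightarrow> 'a" where
  "conjugate w t = w \<circ> t \<circ> inv w"

lemma conjugate_Refl_eq_reflect:
  assumes "w \<in> W" "t \<in> Refl"
  shows "conjugate w t = reflect (w (root t))"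
proof
  fix x
  let ?v = "root t"
  have "conjugate w t x = w (reflect ?v (inv w x))"
    unfolding conjugate_def by (simp add: reflect_root[OF assms(2)])
  also have "\<dots> = w (inv w x - (2 * (inv w x \<bullet> ?v) / (?v \<bullet> ?v)) *\<^sub>R ?v)"
    unfolding reflect_def ..
  also have "\<dots> = x - (2 * (inv w x \<bullet> ?v) / (?v \<bullet> ?v)) *\<^sub>R w ?v"
    using linear_W[OF assms(1)] assms(1) by (simp add: linear_diff linear_scale)
  also have "inv w x \<bullet> ?v = x \<bullet> w ?v" using inner_W_inv[OF assms(1), of ?v x] by (simp add: inner_commute)
  also have "?v \<bullet> ?v = w ?v \<bullet> w ?v" using inner_W[OF assms(1)] by simp
  finally show "conjugate w t x = reflect (w ?v) x" unfolding reflect_def .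
qed

lemma is_reflection_along_conjugate:
  assumes "w \<in> W" "t \<in> Refl"
  shows "is_reflection_along (w (root t)) (conjugate w t)"
proof -
  have "w (root t) \<noteq> 0" using inner_W[OF assms(1), of "root t" "root t"] root_nonzero[OF assms(2)] by auto
  thus ?thesis using conjugate_Refl_eq_reflect[OF assms] is_reflection_along_iff by blast
qed

lemma conjugate_in_Refl:
  assumes "w \<in> W" "t \<in> Refl"
  shows "conjugate w t \<in> Refl"
proof -
  have "conjugate w t \<in> W"
    unfolding conjugate_def using assms comp_in_W inv_in_W Refl_subset_W by blast
  thus ?thesis using is_reflection_along_imp_Refl is_reflection_along_conjugate[OF assms] by blast
qed

lemma conjugate_inv_conjugate [simp]: "w \<in> W \<Longrightarrow> conjugate (inv w) (conjugate w t) = t"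
  unfolding conjugate_def by (auto simp: fun_eq_iff inv_inv_W)

lemma conjugate_conjugate_inv [simp]: "w \<in> W \<Longrightarrow> conjugate w (conjugate (inv w) t) = t"
  unfolding conjugate_def by (auto simp: fun_eq_iff inv_inv_W)

lemma conjugate_image_Refl:
  assumes "w \<in> W"
  shows "conjugate w ` Refl = Refl"
proof
  show "conjugate w ` Refl \<subseteq> Refl" using conjugate_in_Refl[OF assms] by blast
  show "Refl \<subseteq> conjugate w ` Refl"
  proof
    fix t assume "t \<in> Refl"
    hence "conjugate (inv w) t \<in> Refl" using conjugate_in_Refl inv_in_W assms by blast
    thus "t \<in> conjugate w ` Refl" using conjugate_conjugate_inv[OF assms] by (metis image_eqI)
  qed
qed

lemma eq_image_W_if_inv:
  assumes w: "w \<in> W" and mem: "\<And>x. x \<in> S \<longleftrightarrow> inv w x \<in> T"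
  shows "S = w ` T"
proof (rule set_eqI)
  fix x
  show "x \<in> S \<longleftrightarrow> x \<in> w ` T"
  proof
    assume "x \<in> S"
    hence "w (inv w x) \<in> w ` T" using mem by blast
    thus "x \<in> w ` T" using w by simp
  next
    assume "x \<in> w ` T"
    then obtain y where "y \<in> T" "x = w y" by blast
    thus "x \<in> S" using mem[of x] w by simp
  qed
qed

lemma eq_conjugate_image_if:
  assumes w: "w \<in> W" and "S \<subseteq> Refl" "T \<subseteq> Refl"
    and mem: "\<And>t. t \<in> Refl \<Longrightarrow> conjugate w t \<in> S \<longleftrightarrow> t \<in> T"
  shows "S = conjugate w ` T"
proof (rule set_eqI)
  fix t'
  show "t' \<in> S \<longleftrightarrow> t' \<in> conjugate w ` T"
  proof
    assume t': "t' \<in> S"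
    then obtain t where "t \<in> Refl" "t' = conjugate w t"
      using conjugate_image_Refl[OF w] assms(2) by blast
    thus "t' \<in> conjugate w ` T" using mem t' by blast
  next
    assume "t' \<in> conjugate w ` T"
    thus "t' \<in> S" using mem assms(3) by blast
  qed
qed

lemma inner_root_conjugate:
  assumes "w \<in> W" "t \<in> Refl"
  obtains k where "k \<noteq> 0" "\<And>x. w x \<bullet> root (conjugate w t) = k * (x \<bullet> root t)"
proof -
  obtain k where k: "k \<noteq> 0" "w (root t) = k *\<^sub>R root (conjugate w t)"
    using root_unique conjugate_in_Refl[OF assms] is_reflection_along_conjugate[OF assms] by blast
  hence "root (conjugate w t) = (1/k) *\<^sub>R w (root t)" by simp
  hence "w x \<bullet> root (conjugate w t) = (1/k) * (x \<bullet> root t)" for x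
    using inner_W[OF assms(1), of x "root t"] by simp
  thus thesis using that[of "1/k"] k(1) by simp
qed

text \<open>\<open>W\<close> permutes \<open>Refl\<close> by conjugation, and conjugation only rescales roots.\<close>
lemma W_preserves_scale_invariant:
  assumes "w \<in> W" and inv: "\<And>k a b. k \<noteq> 0 \<Longrightarrow> P (k * a) (k * b) \<longleftrightarrow> P a b"
  shows "(\<forall>t\<in>Refl. P (w x \<bullet> root t) (w y \<bullet> root t)) \<longleftrightarrow> (\<forall>t\<in>Refl. P (x \<bullet> root t) (y \<bullet> root t))"
proof -
  have key: "P (w x \<bullet> root (conjugate w t)) (w y \<bullet> root (conjugate w t)) \<longleftrightarrow> P (x \<bullet> root t) (y \<bullet> root t)"
    if t: "t \<in> Refl" for t
  proof -
    obtain k where "k \<noteq> 0" "\<And>x. w x \<bullet> root (conjugate w t) = k * (x \<bullet> root t)"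
      using inner_root_conjugate[OF assms(1) t] by blast
    thus ?thesis using inv by simp
  qed
  have "(\<forall>t\<in>Refl. Q t) \<longleftrightarrow> (\<forall>t\<in>Refl. Q (conjugate w t))" for Q
    using ball_simps(9)[of "conjugate w" Refl Q] by (simp only: conjugate_image_Refl[OF assms(1)])
  hence "(\<forall>t\<in>Refl. P (w x \<bullet> root t) (w y \<bullet> root t)) \<longleftrightarrow>
      (\<forall>t\<in>Refl. P (w x \<bullet> root (conjugate w t)) (w y \<bullet> root (conjugate w t)))" .
  also have "\<dots> \<longleftrightarrow> (\<forall>t\<in>Refl. P (x \<bullet> root t) (y \<bullet> root t))"
    using key by (intro ball_cong) simp_all
  finally show ?thesis .
qed

section \<open>Chambers and walls\<close>

definition separating :: "'a \<Rightarrow> 'a \<Rightarrow> ('a \<Rightarrow> 'a) set" where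
  "separating x y = {t \<in> Refl. (x \<bullet> root t) * (y \<bullet> root t) < 0}"

definition regular :: "'a \<Rightarrow> bool" where
  "regular x \<longleftrightarrow> (\<forall>t\<in>Refl. x \<bullet> root t \<noteq> 0)"

definition closed_chamber :: "'a \<Rightarrow> 'a set" where
  "closed_chamber c = {x. \<forall>t\<in>Refl. 0 \<le> (x \<bullet> root t) * (c \<bullet> root t)}"

lemma separating_subset_Refl: "separating x y \<subseteq> Refl"
  unfolding separating_def by blast

lemma finite_separating: "finite (separating x y)"
  using finite_Refl separating_subset_Refl finite_subset by blast

lemma separating_commute: "separating x y = separating y x"
  unfolding separating_def by (auto simp: mult.commute)

lemma separating_self [simp]: "separating x x = {}"
  unfolding separating_def by (auto simp: not_less)

lemma separating_image:
  assumes "w \<in> W"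
  shows "separating (w x) (w y) = conjugate w ` separating x y"
proof -
  have key: "conjugate w t \<in> separating (w x) (w y) \<longleftrightarrow> t \<in> separating x y" if t: "t \<in> Refl" for t
  proof -
    obtain k where "k \<noteq> 0" "\<And>x. w x \<bullet> root (conjugate w t) = k * (x \<bullet> root t)"
      using inner_root_conjugate[OF assms t] by blast
    thus ?thesis
      unfolding separating_def using t conjugate_in_Refl[OF assms t] scaled_product_sign by simp
  qed
  thus ?thesis by (intro eq_conjugate_image_if[OF assms] separating_subset_Refl)
qed

lemma regular_image: "w \<in> W \<Longrightarrow> regular x \<Longrightarrow> regular (w x)"
  unfolding regular_def using W_preserves_scale_invariant[of w "\<lambda>a b. a \<noteq> 0" x x] by simp

lemma closed_chamber_image: "w \<in> W \<Longrightarrow> x \<in> closed_chamber c \<Longrightarrow> w x \<in> closed_chamber (w c)"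
  unfolding closed_chamber_def
  using W_preserves_scale_invariant[of w "\<lambda>a b. 0 \<le> a * b" x c] scaled_product_sign(2) by simp

lemma separating_symdiff:
  assumes "regular x" "regular y" "regular z"
  shows "separating x z = (separating x y - separating y z) \<union> (separating y z - separating x y)"
proof -
  have key: "(x \<bullet> root t) * (z \<bullet> root t) < 0 \<longleftrightarrow> \<not> ((x \<bullet> root t) * (y \<bullet> root t) < 0 \<longleftrightarrow> (y \<bullet> root t) * (z \<bullet> root t) < 0)"
    if "t \<in> Refl" for t
  proof -
    have nz: "x \<bullet> root t \<noteq> 0" "y \<bullet> root t \<noteq> 0" "z \<bullet> root t \<noteq> 0"
      using assms that unfolding regular_def by auto
    have neg: "a * b < 0 \<longleftrightarrow> (a < 0 \<longleftrightarrow> \<not> b < 0)" if "a \<noteq> 0" "b \<noteq> 0" for a b :: real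
      using that by (auto simp: mult_less_0_iff)
    show ?thesis unfolding neg[OF nz(1) nz(3)] neg[OF nz(1) nz(2)] neg[OF nz(2) nz(3)] by blast
  qed
  show ?thesis
  proof (rule set_eqI)
    fix t
    show "t \<in> separating x z \<longleftrightarrow> t \<in> (separating x y - separating y z) \<union> (separating y z - separating x y)"
      using key[of t] unfolding separating_def by blast
  qed
qed

lemma separating_iff_sgn:
  "t \<in> separating x y \<longleftrightarrow> t \<in> Refl \<and> x \<bullet> root t \<noteq> 0 \<and> sgn (y \<bullet> root t) = - sgn (x \<bullet> root t)"
  unfolding separating_def by (simp add: mult_less_0_iff_sgn)

lemma separating_empty_if_same_signs:
  assumes "\<And>t. t \<in> Refl \<Longrightarrow> sgn (y \<bullet> root t) = sgn (x \<bullet> root t)"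
  shows "separating x y = {}"
  using assms by (auto simp: separating_iff_sgn sgn_0_0)

lemma separating_eq_if_same_chamber:
  assumes "regular x" "regular y" "regular z" "separating x y = {}"
  shows "separating x z = separating y z"
  using separating_symdiff[OF assms(1-3)] assms(4) by simp

lemma regular_exists: "\<exists>d. regular d"
proof -
  have "\<forall>t\<in>Refl. \<exists>z\<in>UNIV. z \<bullet> root t \<noteq> 0" using root_nonzero by (metis UNIV_I inner_eq_zero_iff)
  thus ?thesis
    unfolding regular_def using subspace_point_off_hyperplanes[OF subspace_UNIV finite_Refl] by blast
qed

lemma regular_near:
  "\<exists>c. regular c \<and> (\<forall>t\<in>Refl. a \<bullet> root t \<noteq> 0 \<longrightarrow> sgn (c \<bullet> root t) = sgn (a \<bullet> root t))"
proof -
  obtain d where d: "regular d" using regular_exists by blast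
  let ?T = "{t \<in> Refl. a \<bullet> root t \<noteq> 0}"
  have "finite ?T" "\<forall>t\<in>?T. a \<bullet> root t \<noteq> 0" using finite_Refl by simp_all
  then obtain \<epsilon> where \<epsilon>: "\<epsilon> > 0"
    "\<And>\<delta>. \<bar>\<delta>\<bar> < \<epsilon> \<Longrightarrow> \<forall>t\<in>?T. sgn ((a + \<delta> *\<^sub>R d) \<bullet> root t) = sgn (a \<bullet> root t)"
    using small_perturbation_keeps_signs by blast
  let ?c = "a + (\<epsilon> / 2) *\<^sub>R d"
  have signs: "\<forall>t\<in>?T. sgn (?c \<bullet> root t) = sgn (a \<bullet> root t)" using \<epsilon>(2)[of "\<epsilon> / 2"] \<epsilon>(1) by simp
  have "?c \<bullet> root t \<noteq> 0" if "t \<in> Refl" for t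
  proof (cases "a \<bullet> root t = 0")
    case True
    thus ?thesis using d that \<epsilon>(1) unfolding regular_def by (simp add: inner_add_left)
  next
    case False
    hence "sgn (?c \<bullet> root t) \<noteq> 0" using signs that by (simp add: sgn_zero_iff)
    thus ?thesis by auto
  qed
  thus ?thesis using signs unfolding regular_def by blast
qed

lemma root_not_parallel:
  assumes "t \<in> Refl" "t' \<in> Refl" "t \<noteq> t'"
  shows "\<exists>z. z \<bullet> root t = 0 \<and> z \<bullet> root t' \<noteq> 0"
proof -
  let ?v = "root t" and ?v' = "root t'"
  let ?c = "(?v' \<bullet> ?v) / (?v \<bullet> ?v)"
  let ?z = "?v' - ?c *\<^sub>R ?v"
  have z_perp: "?z \<bullet> ?v = 0" using root_nonzero[OF assms(1)] by (simp add: inner_diff_left)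
  have "?z \<noteq> 0"
  proof
    assume "?z = 0"
    hence "?v' = ?c *\<^sub>R ?v" by simp
    moreover have "?c \<noteq> 0" using \<open>?z = 0\<close> root_nonzero[OF assms(2)] by auto
    ultimately have "reflect ?v' = reflect ?v" using reflect_scaleR by metis
    thus False using reflect_root assms by metis
  qed
  moreover have "?z \<bullet> ?v' = ?z \<bullet> ?z" using z_perp by (simp add: inner_diff_right inner_commute)
  ultimately show ?thesis using z_perp by auto
qed

text \<open>For regular \<open>c\<close> these are the simple reflections \<open>S\<close>, the chamber of \<open>c\<close> playing the role
  of \<open>C\<^sup>+\<close>.\<close>
definition walls :: "'a \<Rightarrow> ('a \<Rightarrow> 'a) set" where
  "walls c = {t \<in> Refl. separating c (t c) = {t}}"

lemma walls_subset_Refl: "walls c \<subseteq> Refl"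
  unfolding walls_def by blast

text \<open>Such a \<open>q\<close> lies on a facet of the chamber of \<open>e\<close>; a point of that chamber close to \<open>q\<close> is
  separated from its mirror image by the mirror of \<open>t\<close> only.\<close>
lemma exists_point_near_facet:
  assumes e: "regular e" and t: "t \<in> Refl" and q: "q \<bullet> root t = 0"
    and side: "\<forall>t'\<in>Refl - {t}. 0 < (q \<bullet> root t') * (e \<bullet> root t')"
  shows "\<exists>e1. regular e1 \<and> separating e e1 = {} \<and> separating e1 (t e1) = {t}"
proof -
  let ?v = "root t"
  have "finite (Refl - {t})" using finite_Refl by simp
  moreover have "\<forall>t'\<in>Refl - {t}. q \<bullet> root t' \<noteq> 0" using side by force
  ultimately obtain \<epsilon> where \<epsilon>: "\<epsilon> > 0"
    "\<And>\<delta>. \<bar>\<delta>\<bar> < \<epsilon> \<Longrightarrow> \<forall>t'\<in>Refl - {t}. sgn ((q + \<delta> *\<^sub>R ?v) \<bullet> root t') = sgn (q \<bullet> root t')"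
    using small_perturbation_keeps_signs by blast
  define \<delta> where "\<delta> = sgn (e \<bullet> ?v) * (\<epsilon> / 2)"
  have \<delta>: "\<bar>\<delta>\<bar> < \<epsilon>" "\<bar>- \<delta>\<bar> < \<epsilon>" "sgn \<delta> = sgn (e \<bullet> ?v)"
    using \<epsilon>(1) e t unfolding \<delta>_def regular_def by (auto simp: abs_mult sgn_mult abs_sgn_eq)
  define e1 where "e1 = q + \<delta> *\<^sub>R ?v"
  have te1: "t e1 = q + (- \<delta>) *\<^sub>R ?v"
  proof -
    have "t q = q" using Refl_fixed_iff[OF t] q by simp
    moreover have "t ?v = - ?v" using reflect_self[of ?v] by (simp add: reflect_root[OF t])
    ultimately show ?thesis unfolding e1_def using linear_Refl[OF t] by (simp add: linear_add linear_scale)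
  qed
  have off_t: "sgn (x \<bullet> root t') = sgn (e \<bullet> root t')" if "x \<in> {e1, t e1}" "t' \<in> Refl - {t}" for x t'
    using \<epsilon>(2)[OF \<delta>(1)] \<epsilon>(2)[OF \<delta>(2)] that side te1 unfolding e1_def
    by (auto simp: zero_less_mult_iff_sgn)
  have on_t: "sgn (e1 \<bullet> ?v) = sgn (e \<bullet> ?v)" "sgn (t e1 \<bullet> ?v) = - sgn (e \<bullet> ?v)"
    using \<delta>(3) q root_nonzero[OF t] unfolding te1 unfolding e1_def
    by (simp_all add: inner_add_left inner_diff_left sgn_mult)
  have signs: "sgn (e1 \<bullet> root t') = sgn (e \<bullet> root t')" if "t' \<in> Refl" for t'
    using off_t[of e1 t'] on_t that by (cases "t' = t") auto
  have e1: "regular e1"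
    using e signs unfolding regular_def by (metis sgn_zero_iff)
  have "t' \<in> separating e1 (t e1) \<longleftrightarrow> t' = t" for t'
  proof (cases "t' \<in> Refl - {t}")
    case True
    thus ?thesis using off_t[of e1 t'] off_t[of "t e1" t'] e unfolding separating_iff_sgn regular_def
      by (auto simp: sgn_zero_iff)
  next
    case False
    thus ?thesis using on_t t e e1 unfolding separating_iff_sgn regular_def by auto
  qed
  hence "separating e1 (t e1) = {t}" by blast
  moreover have "separating e e1 = {}" using separating_empty_if_same_signs signs by metis
  ultimately show ?thesis using e1 by blast
qed

lemma in_walls_if_facet_point:
  assumes e: "regular e" and t: "t \<in> Refl" and q: "q \<bullet> root t = 0"
    and side: "\<forall>t'\<in>Refl - {t}. 0 < (q \<bullet> root t') * (e \<bullet> root t')"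
  shows "t \<in> walls e"
proof -
  obtain e1 where e1: "regular e1" "separating e e1 = {}" "separating e1 (t e1) = {t}"
    using exists_point_near_facet[OF assms] by blast
  have tW: "t \<in> W" using t Refl_subset_W by blast
  have reg: "regular (t e1)" "regular (t e)" using regular_image[OF tW] e e1(1) by blast+
  have "separating (t e) (t e1) = {}" using separating_image[OF tW, of e e1] e1(2) by simp
  hence "separating (t e) e1 = {t}"
    using separating_eq_if_same_chamber[OF reg(2,1) e1(1)] e1(3) separating_commute by metis
  hence "separating e (t e) = {t}"
    using separating_eq_if_same_chamber[OF e e1(1) reg(2) e1(2)] separating_commute by metis
  thus ?thesis unfolding walls_def using t by blast
qed

lemma walls_exist: "t \<in> Refl \<Longrightarrow> \<exists>e. regular e \<and> t \<in> walls e"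
proof -
  assume t: "t \<in> Refl"
  let ?v = "root t"
  have "\<forall>t'\<in>Refl - {t}. \<exists>z\<in>{x. x \<bullet> ?v = 0}. z \<bullet> root t' \<noteq> 0"
    using root_not_parallel t by blast
  then obtain q where q: "q \<bullet> ?v = 0" "\<forall>t'\<in>Refl - {t}. q \<bullet> root t' \<noteq> 0"
    using subspace_point_off_hyperplanes[of "{x. x \<bullet> ?v = 0}" "Refl - {t}" root]
      subspace_hyperplane2[of ?v] finite_Refl by (auto simp: inner_commute)
  have "finite (Refl - {t})" using finite_Refl by simp
  then obtain \<epsilon> where \<epsilon>: "\<epsilon> > 0"
    "\<And>\<delta>. \<bar>\<delta>\<bar> < \<epsilon> \<Longrightarrow> \<forall>t'\<in>Refl - {t}. sgn ((q + \<delta> *\<^sub>R ?v) \<bullet> root t') = sgn (q \<bullet> root t')"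
    using small_perturbation_keeps_signs q(2) by blast
  define e where "e = q + (\<epsilon> / 2) *\<^sub>R ?v"
  have side: "\<forall>t'\<in>Refl - {t}. 0 < (q \<bullet> root t') * (e \<bullet> root t')"
    using \<epsilon>(2)[of "\<epsilon> / 2"] \<epsilon>(1) q(2) unfolding e_def by (simp add: zero_less_mult_iff_sgn)
  have "e \<bullet> ?v \<noteq> 0" using \<epsilon>(1) q(1) root_nonzero[OF t] unfolding e_def by (simp add: inner_add_left)
  hence "regular e" using side t unfolding regular_def by force
  thus ?thesis using in_walls_if_facet_point[OF _ t q(1) side] by blast
qed

definition cuts_out_chamber :: "'a \<Rightarrow> ('a \<Rightarrow> 'a) set \<Rightarrow> bool" where
  "cuts_out_chamber e F \<longleftrightarrow> F \<subseteq> Refl \<and> (\<forall>x. (\<forall>t\<in>F. 0 < (x \<bullet> root t) * (e \<bullet> root t))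
      \<longrightarrow> (\<forall>t\<in>Refl. 0 < (x \<bullet> root t) * (e \<bullet> root t)))"

text \<open>Otherwise a small push of \<open>q\<close> off the mirror of \<open>t\<close>, inside a mirror on the wrong side of
  which \<open>q\<close> lies, would satisfy the inequalities of \<open>F\<close> without being in the chamber.\<close>
lemma facet_point_on_chamber_side:
  assumes e: "regular e" and F: "cuts_out_chamber e F"
    and t: "t \<in> F" and q: "q \<bullet> root t = 0"
    and side: "\<forall>t'\<in>F - {t}. 0 < (q \<bullet> root t') * (e \<bullet> root t')"
    and t'': "t'' \<in> Refl - {t}"
  shows "0 < (q \<bullet> root t'') * (e \<bullet> root t'')"
proof -
  have FR: "F \<subseteq> Refl" using F unfolding cuts_out_chamber_def by blast
  have tR: "t \<in> Refl" using t FR by blast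
  obtain z where z: "z \<bullet> root t'' = 0" "z \<bullet> root t \<noteq> 0"
    using root_not_parallel[of t'' t] t'' tR by auto
  define u where "u = ((e \<bullet> root t) * (z \<bullet> root t)) *\<^sub>R z"
  have u_t: "sgn (u \<bullet> root t) = sgn (e \<bullet> root t)"
    using z(2) unfolding u_def by (simp add: sgn_mult mult.assoc)
  have u_t'': "u \<bullet> root t'' = 0" unfolding u_def using z(1) by simp
  have "finite (F - {t})" using FR finite_Refl finite_subset by blast
  moreover have "\<forall>t'\<in>F - {t}. q \<bullet> root t' \<noteq> 0" using side by force
  ultimately obtain \<epsilon> where \<epsilon>: "\<epsilon> > 0"
    "\<And>\<delta>. \<bar>\<delta>\<bar> < \<epsilon> \<Longrightarrow> \<forall>t'\<in>F - {t}. sgn ((q + \<delta> *\<^sub>R u) \<bullet> root t') = sgn (q \<bullet> root t')"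
    using small_perturbation_keeps_signs by blast
  define p where "p = q + (\<epsilon> / 2) *\<^sub>R u"
  have "0 < (p \<bullet> root t') * (e \<bullet> root t')" if "t' \<in> F" for t'
  proof (cases "t' = t")
    case True
    have "sgn (p \<bullet> root t) = sgn (e \<bullet> root t)"
      using q u_t \<epsilon>(1) unfolding p_def by (simp add: inner_add_left sgn_mult)
    moreover have "sgn (e \<bullet> root t) \<noteq> 0" using e tR unfolding regular_def by (simp add: sgn_zero_iff)
    ultimately have "p \<bullet> root t \<noteq> 0" by (metis sgn_0_0)
    thus ?thesis using True \<open>sgn (p \<bullet> root t) = sgn (e \<bullet> root t)\<close> by (simp add: zero_less_mult_iff_sgn)
  next
    case False
    hence "t' \<in> F - {t}" using that by blast
    hence "sgn (p \<bullet> root t') = sgn (q \<bullet> root t')" "0 < (q \<bullet> root t') * (e \<bullet> root t')"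
      using \<epsilon>(2)[of "\<epsilon> / 2"] \<epsilon>(1) side unfolding p_def by auto
    thus ?thesis by (metis zero_less_mult_iff_sgn sgn_0_0)
  qed
  hence "0 < (p \<bullet> root t'') * (e \<bullet> root t'')" using F t'' unfolding cuts_out_chamber_def by blast
  moreover have "p \<bullet> root t'' = q \<bullet> root t''" unfolding p_def using u_t'' by (simp add: inner_add_left)
  ultimately show ?thesis by simp
qed

text \<open>If \<open>t\<close> cannot be dropped from \<open>F\<close>, some \<open>y\<close> satisfies all inequalities of \<open>F\<close> except the one
  for \<open>t\<close>; the segment from \<open>e\<close> to \<open>y\<close> meets the mirror of \<open>t\<close> in a point still satisfying the
  others.\<close>
lemma exists_facet_point_if_irredundant:
  assumes e: "regular e" and F: "cuts_out_chamber e F" and t: "t \<in> F"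
    and irredundant: "\<not> cuts_out_chamber e (F - {t})"
  shows "\<exists>q. q \<bullet> root t = 0 \<and> (\<forall>t'\<in>F - {t}. 0 < (q \<bullet> root t') * (e \<bullet> root t'))"
proof -
  have FR: "F \<subseteq> Refl" and F_cuts:
    "\<And>x. \<forall>t'\<in>F. 0 < (x \<bullet> root t') * (e \<bullet> root t') \<Longrightarrow> \<forall>t'\<in>Refl. 0 < (x \<bullet> root t') * (e \<bullet> root t')"
    using F unfolding cuts_out_chamber_def by blast+
  have e_t: "e \<bullet> root t \<noteq> 0" using e t FR unfolding regular_def by blast
  have "F - {t} \<subseteq> Refl" using FR by blast
  hence "\<not> (\<forall>x. (\<forall>t'\<in>F - {t}. 0 < (x \<bullet> root t') * (e \<bullet> root t'))
      \<longrightarrow> (\<forall>t'\<in>Refl. 0 < (x \<bullet> root t') * (e \<bullet> root t')))"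
    using irredundant unfolding cuts_out_chamber_def by simp
  then obtain y where y: "\<forall>t'\<in>F - {t}. 0 < (y \<bullet> root t') * (e \<bullet> root t')"
    "\<not> (\<forall>t'\<in>Refl. 0 < (y \<bullet> root t') * (e \<bullet> root t'))"
    by blast
  have "(y \<bullet> root t) * (e \<bullet> root t) \<le> 0"
  proof (rule ccontr)
    assume "\<not> ?thesis"
    hence "\<forall>t'\<in>F. 0 < (y \<bullet> root t') * (e \<bullet> root t')" using y(1) by auto
    thus False using F_cuts y(2) by blast
  qed
  then obtain l where l: "0 < l" "l \<le> 1" "(e + l *\<^sub>R (y - e)) \<bullet> root t = 0"
    using segment_meets_hyperplane e_t by blast
  have "0 < ((e + l *\<^sub>R (y - e)) \<bullet> root t') * (e \<bullet> root t')" if "t' \<in> F - {t}" for t'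
  proof -
    have "((e + l *\<^sub>R (y - e)) \<bullet> root t') * (e \<bullet> root t') =
        (1 - l) * ((e \<bullet> root t') * (e \<bullet> root t')) + l * ((y \<bullet> root t') * (e \<bullet> root t'))"
      by (simp add: inner_add_left inner_diff_left algebra_simps)
    moreover have "0 \<le> (1 - l) * ((e \<bullet> root t') * (e \<bullet> root t'))" using l(2) by simp
    moreover have "0 < l * ((y \<bullet> root t') * (e \<bullet> root t'))" using l(1) y(1) that by simp
    ultimately show ?thesis by linarith
  qed
  thus ?thesis using l(3) by blast
qed

text \<open>Some mirror of a minimal set cutting out the chamber of \<open>e\<close> separates \<open>c\<close> from \<open>e\<close>, and by
  minimality it carries a facet.\<close>
lemma exists_wall_separating:
  assumes c: "regular c" and e: "regular e" and ne: "separating c e \<noteq> {}"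
  shows "\<exists>t\<in>separating c e. t \<in> walls e"
proof -
  have "cuts_out_chamber e Refl" unfolding cuts_out_chamber_def by blast
  then obtain F where F: "cuts_out_chamber e F"
    and min: "\<And>F'. cuts_out_chamber e F' \<Longrightarrow> card F \<le> card F'"
    using ex_has_least_nat[of "cuts_out_chamber e" Refl card] by blast
  have FR: "F \<subseteq> Refl" using F unfolding cuts_out_chamber_def by blast
  obtain t0 where "t0 \<in> separating c e" using ne by blast
  hence "t0 \<in> Refl" "\<not> 0 < (c \<bullet> root t0) * (e \<bullet> root t0)" unfolding separating_def by auto
  hence "\<not> (\<forall>t'\<in>Refl. 0 < (c \<bullet> root t') * (e \<bullet> root t'))" by blast
  then obtain t where t: "t \<in> F" "\<not> 0 < (c \<bullet> root t) * (e \<bullet> root t)"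
    using F unfolding cuts_out_chamber_def by blast
  have tR: "t \<in> Refl" using t(1) FR by blast
  have "c \<bullet> root t \<noteq> 0" "e \<bullet> root t \<noteq> 0" using c e tR unfolding regular_def by blast+
  hence tsep: "t \<in> separating c e" using t(2) tR unfolding separating_def by (simp add: not_less le_less)
  have "finite F" using FR finite_Refl finite_subset by blast
  hence "card (F - {t}) < card F" using card_Diff1_less t(1) by metis
  hence "\<not> cuts_out_chamber e (F - {t})" using min[of "F - {t}"] by linarith
  then obtain q where q: "q \<bullet> root t = 0" "\<forall>t'\<in>F - {t}. 0 < (q \<bullet> root t') * (e \<bullet> root t')"
    using exists_facet_point_if_irredundant[OF e F t(1)] by blast
  hence "\<forall>t''\<in>Refl - {t}. 0 < (q \<bullet> root t'') * (e \<bullet> root t'')"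
    using facet_point_on_chamber_side[OF e F t(1)] by blast
  thus ?thesis using in_walls_if_facet_point[OF e tR q(1)] tsep by blast
qed

section \<open>Simple reflections and the fundamental domain\<close>

lemma walls_of_same_chamber:
  assumes x: "regular x" and y: "regular y" and xy: "separating x y = {}" and t: "t \<in> walls y"
  shows "t \<in> walls x"
proof -
  have tR: "t \<in> Refl" using t walls_subset_Refl by blast
  hence tW: "t \<in> W" using Refl_subset_W by blast
  have reg: "regular (t x)" "regular (t y)" using regular_image[OF tW] x y by blast+
  have "separating (t x) (t y) = {}" using separating_image[OF tW, of x y] xy by simp
  hence "separating (t x) y = separating (t y) y" using separating_eq_if_same_chamber[OF reg y] by blast
  hence "separating y (t x) = {t}" using t unfolding walls_def by (simp add: separating_commute)
  moreover have "separating x (t x) = separating y (t x)"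
    using separating_eq_if_same_chamber[OF x y reg(1) xy] .
  ultimately show ?thesis using tR unfolding walls_def by simp
qed

lemma conjugate_in_walls:
  assumes w: "w \<in> W" and t: "t \<in> walls (w c)"
  shows "conjugate (inv w) t \<in> walls c"
proof -
  have iw: "inv w \<in> W" using inv_in_W[OF w] .
  have tR: "t \<in> Refl" using t walls_subset_Refl by blast
  have "conjugate (inv w) t c = inv w (t (w c))" unfolding conjugate_def by (simp add: inv_inv_W[OF w])
  hence "separating c (conjugate (inv w) t c) = separating (inv w (w c)) (inv w (t (w c)))"
    using w by simp
  also have "\<dots> = conjugate (inv w) ` separating (w c) (t (w c))" using separating_image[OF iw] .
  finally have "separating c (conjugate (inv w) t c) = {conjugate (inv w) t}"
    using t unfolding walls_def by simp
  thus ?thesis using conjugate_in_Refl[OF iw tR] unfolding walls_def by blast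
qed

lemma gen_group_walls_subset_W: "gen_group (walls c) \<subseteq> W"
  using gen_group_least[of "walls c" W] walls_subset_Refl Refl_subset_W id_in_W comp_in_W by blast

lemma wall_comp_in_gen_group_walls:
  assumes w: "w \<in> gen_group (walls c)" and t: "t \<in> walls (w c)"
  shows "t \<circ> w \<in> gen_group (walls c)"
proof -
  have wW: "w \<in> W" using w gen_group_walls_subset_W by blast
  have "t \<circ> w = w \<circ> conjugate (inv w) t"
    unfolding conjugate_def using wW by (simp add: inv_inv_W fun_eq_iff)
  thus ?thesis
    using gen_group_comp[OF w gen_group_generator[OF conjugate_in_walls[OF wW t]]] by simp
qed

text \<open>Crossing a wall of the chamber of \<open>e\<close> that separates it from \<open>c\<close> decreases the number of
  separating mirrors.\<close>
lemma gen_group_walls_transitive: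
  assumes c: "regular c"
  shows "regular e \<Longrightarrow> \<exists>w\<in>gen_group (walls c). separating (w c) e = {}"
proof (induction "card (separating c e)" arbitrary: e rule: less_induct)
  case less
  show ?case
  proof (cases "separating c e = {}")
    case True
    thus ?thesis using gen_group.gen_id[of "walls c"] by (intro bexI[of _ id]) simp_all
  next
    case False
    then obtain t where t: "t \<in> separating c e" "t \<in> walls e"
      using exists_wall_separating[OF c less.prems] by blast
    have tR: "t \<in> Refl" using t(2) walls_subset_Refl by blast
    have tW: "t \<in> W" using tR Refl_subset_W by blast
    define e' where "e' = t e"
    have e': "regular e'" unfolding e'_def using regular_image[OF tW less.prems] .
    have ee': "e = t e'" unfolding e'_def using Refl_involution[OF tR] by simp
    have sep_ee': "separating e e' = {t}" using t(2) unfolding walls_def e'_def by blast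
    hence "separating c e' = separating c e - {t}"
      using separating_symdiff[OF c less.prems e'] t(1) by auto
    hence "card (separating c e') < card (separating c e)"
      using t(1) finite_separating card_Diff1_less by metis
    then obtain w where w: "w \<in> gen_group (walls c)" "separating (w c) e' = {}"
      using less.hyps e' by blast
    have wW: "w \<in> W" using w(1) gen_group_walls_subset_W by blast
    have "separating e' (t e') = {t}" using sep_ee' separating_commute[of e e'] ee' by simp
    hence "t \<in> walls e'" using tR unfolding walls_def by blast
    hence "t \<circ> w \<in> gen_group (walls c)"
      using wall_comp_in_gen_group_walls[OF w(1)] walls_of_same_chamber[OF regular_image[OF wW c] e' w(2)]
      by blast
    moreover have "separating ((t \<circ> w) c) e = {}"
      using separating_image[OF tW, of "w c" e'] w(2) ee' by simp
    ultimately show ?thesis by blast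
  qed
qed

lemma W_eq_gen_group_walls:
  assumes c: "regular c"
  shows "W = gen_group (walls c)"
proof
  show "gen_group (walls c) \<subseteq> W" by (rule gen_group_walls_subset_W)
  have "Refl \<subseteq> gen_group (walls c)"
  proof
    fix t assume tR: "t \<in> Refl"
    obtain e where e: "regular e" "t \<in> walls e" using walls_exist[OF tR] by blast
    obtain w where w: "w \<in> gen_group (walls c)" "separating (w c) e = {}"
      using gen_group_walls_transitive[OF c e(1)] by blast
    have wW: "w \<in> W" using w(1) gen_group_walls_subset_W by blast
    have "t \<circ> w \<in> gen_group (walls c)"
      using wall_comp_in_gen_group_walls[OF w(1)] walls_of_same_chamber[OF regular_image[OF wW c] e(1) w(2) e(2)]
      by blast
    moreover obtain h where h: "h \<in> gen_group (walls c)" "w \<circ> h = id"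
      using gen_group_inverse[of "walls c" w] Refl_comp_self walls_subset_Refl w(1) by blast
    ultimately have "(t \<circ> w) \<circ> h \<in> gen_group (walls c)" using gen_group_comp by blast
    thus "t \<in> gen_group (walls c)" using h(2) by (simp add: comp_assoc)
  qed
  thus "W \<subseteq> gen_group (walls c)"
    using W_eq_gen_group gen_group_least[of Refl "gen_group (walls c)"] gen_group.gen_id gen_group_comp
    by metis
qed

text \<open>For a word \<open>s\<^sub>1 \<dots> s\<^sub>k\<close> these are the reflections \<open>s\<^sub>1, s\<^sub>1 s\<^sub>2 s\<^sub>1, \<dots>\<close> in the mirrors crossed by
  the gallery \<open>c, s\<^sub>1 c, s\<^sub>1 s\<^sub>2 c, \<dots>\<close>.\<close>
fun inversion_list :: "('a \<Rightarrow> 'a) list \<Rightarrow> ('a \<Rightarrow> 'a) list" where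
  "inversion_list [] = []"
| "inversion_list (a # ws) = a # map (conjugate a) (inversion_list ws)"

lemma compose_list_in_W: "set ws \<subseteq> Refl \<Longrightarrow> compose_list ws \<in> W"
  using gen_group_iff_word[of "compose_list ws" Refl] W_eq_gen_group by blast

lemma separating_compose_list:
  assumes c: "regular c"
  shows "set ws \<subseteq> walls c \<Longrightarrow> distinct (inversion_list ws) \<Longrightarrow>
    separating c (compose_list ws c) = set (inversion_list ws)"
proof (induction ws)
  case Nil
  show ?case by simp
next
  case (Cons a ws)
  have a: "a \<in> walls c" and ws: "set ws \<subseteq> walls c" using Cons.prems by auto
  have aW: "a \<in> W" using a walls_subset_Refl Refl_subset_W by blast
  have wsW: "compose_list ws \<in> W" using compose_list_in_W ws walls_subset_Refl by blast
  have dist: "distinct (inversion_list ws)" "a \<notin> set (map (conjugate a) (inversion_list ws))"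
    using Cons.prems(2) distinct_map by auto
  have reg: "regular (a c)" "regular (a (compose_list ws c))"
    using regular_image aW wsW c by auto
  have "separating c (a c) = {a}" using a unfolding walls_def by blast
  moreover have "separating (a c) (a (compose_list ws c)) = set (map (conjugate a) (inversion_list ws))"
    using separating_image[OF aW] Cons.IH[OF ws dist(1)] by simp
  ultimately show ?case
    using separating_symdiff[OF c reg] dist(2) by auto
qed

lemma compose_list_delete:
  "set ws \<subseteq> Refl \<Longrightarrow> a \<in> set (inversion_list ws) \<Longrightarrow>
    \<exists>vs. set vs \<subseteq> set ws \<and> length vs < length ws \<and> compose_list ws = a \<circ> compose_list vs"
proof (induction ws arbitrary: a)
  case Nil
  thus ?case by simp
next
  case (Cons b ws)
  have b: "b \<in> Refl" and ws: "set ws \<subseteq> Refl" using Cons.prems by auto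
  show ?case
  proof (cases "a = b")
    case True
    thus ?thesis by (intro exI[of _ ws]) auto
  next
    case False
    then obtain t where t: "t \<in> set (inversion_list ws)" "a = conjugate b t" using Cons.prems(2) by auto
    obtain vs where vs: "set vs \<subseteq> set ws" "length vs < length ws" "compose_list ws = t \<circ> compose_list vs"
      using Cons.IH[OF ws t(1)] by blast
    have "compose_list (b # ws) = a \<circ> compose_list (b # vs)"
      using t(2) vs(3) Refl_involution[OF b]
      by (simp add: conjugate_def fun_eq_iff inv_equality[of b b])
    thus ?thesis using vs by (intro exI[of _ "b # vs"]) auto
  qed
qed

lemma compose_list_shorten:
  "set ws \<subseteq> Refl \<Longrightarrow> \<not> distinct (inversion_list ws) \<Longrightarrow>
    \<exists>vs. set vs \<subseteq> set ws \<and> length vs < length ws \<and> compose_list vs = compose_list ws"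
proof (induction ws)
  case Nil
  thus ?case by simp
next
  case (Cons a ws)
  have a: "a \<in> Refl" and ws: "set ws \<subseteq> Refl" using Cons.prems by auto
  have aW: "a \<in> W" using a Refl_subset_W by blast
  have "inj_on (conjugate a) (set (inversion_list ws))"
    by (metis aW conjugate_inv_conjugate inj_on_inverseI)
  hence "a \<in> set (map (conjugate a) (inversion_list ws)) \<or> \<not> distinct (inversion_list ws)"
    using Cons.prems(2) distinct_map by auto
  thus ?case
  proof
    assume "a \<in> set (map (conjugate a) (inversion_list ws))"
    then obtain t where t: "t \<in> set (inversion_list ws)" "a = conjugate a t" by auto
    have "conjugate a a = a" unfolding conjugate_def using Refl_involution[OF a]
      by (simp add: fun_eq_iff inv_equality[of a a])
    hence "t = a" using t(2) conjugate_inv_conjugate[OF aW, of t] conjugate_inv_conjugate[OF aW, of a] by simp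
    then obtain vs where vs: "set vs \<subseteq> set ws" "length vs < length ws" "compose_list ws = a \<circ> compose_list vs"
      using compose_list_delete[OF ws] t(1) by blast
    have "compose_list (a # ws) = compose_list vs"
      using vs(3) Refl_involution[OF a] by (simp add: fun_eq_iff)
    thus ?thesis using vs by (intro exI[of _ vs]) auto
  next
    assume "\<not> distinct (inversion_list ws)"
    then obtain vs where "set vs \<subseteq> set ws" "length vs < length ws" "compose_list vs = compose_list ws"
      using Cons.IH ws by blast
    thus ?thesis by (intro exI[of _ "a # vs"]) auto
  qed
qed

text \<open>A shortest word in the walls of the chamber of \<open>c\<close> crosses distinct mirrors, which are
  exactly the mirrors separating \<open>c\<close> from \<open>w c\<close>.\<close>
lemma eq_id_if_separating_empty:
  assumes c: "regular c" and w: "w \<in> W" and sep: "separating c (w c) = {}"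
  shows "w = id"
proof -
  have "\<exists>ws. set ws \<subseteq> walls c \<and> w = compose_list ws"
    using w W_eq_gen_group_walls[OF c] gen_group_iff_word by blast
  then obtain ws where ws: "set ws \<subseteq> walls c" "w = compose_list ws"
    and shortest: "\<And>vs. set vs \<subseteq> walls c \<and> w = compose_list vs \<Longrightarrow> length ws \<le> length vs"
    using ex_has_least_nat[of "\<lambda>ws. set ws \<subseteq> walls c \<and> w = compose_list ws" _ length] by blast
  have wsR: "set ws \<subseteq> Refl" using ws(1) walls_subset_Refl by blast
  have "distinct (inversion_list ws)"
  proof (rule ccontr)
    assume "\<not> distinct (inversion_list ws)"
    then obtain vs where "set vs \<subseteq> set ws" "length vs < length ws" "compose_list vs = compose_list ws"
      using compose_list_shorten[OF wsR] by blast
    thus False using shortest[of vs] ws by fastforce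
  qed
  hence "set (inversion_list ws) = {}" using separating_compose_list[OF c ws(1)] ws(2) sep by simp
  hence "ws = []" by (cases ws) auto
  thus ?thesis using ws(2) by simp
qed

text \<open>The closed chamber is a strict fundamental domain: if \<open>w\<close> moves \<open>x\<close> within it, then a wall
  of \<open>w c\<close> separating it from \<open>c\<close> contains \<open>w x\<close>, and reflecting in it shortens \<open>w\<close>.\<close>
lemma closed_chamber_fundamental_domain:
  assumes c: "regular c"
  shows "w \<in> W \<Longrightarrow> x \<in> closed_chamber c \<Longrightarrow> w x \<in> closed_chamber c \<Longrightarrow> w x = x"
proof (induction "card (separating c (w c))" arbitrary: w rule: less_induct)
  case less
  show ?case
  proof (cases "separating c (w c) = {}")
    case True
    thus ?thesis using eq_id_if_separating_empty[OF c less.prems(1)] by simp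
  next
    case False
    have wc: "regular (w c)" using regular_image[OF less.prems(1) c] .
    obtain t where t: "t \<in> separating c (w c)" "t \<in> walls (w c)"
      using exists_wall_separating[OF c wc False] by blast
    have tR: "t \<in> Refl" using t(1) separating_subset_Refl by blast
    have tW: "t \<in> W" using tR Refl_subset_W by blast
    have "0 \<le> (w x \<bullet> root t) * (w c \<bullet> root t)"
      using closed_chamber_image[OF less.prems(1,2)] tR unfolding closed_chamber_def by blast
    moreover have "0 \<le> (w x \<bullet> root t) * (c \<bullet> root t)"
      using less.prems(3) tR unfolding closed_chamber_def by blast
    moreover have "(c \<bullet> root t) * (w c \<bullet> root t) < 0" using t(1) unfolding separating_def by blast
    ultimately have "w x \<bullet> root t = 0"
      by (auto simp: zero_le_mult_iff mult_less_0_iff)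
    hence fix_wx: "t (w x) = w x" using Refl_fixed_iff[OF tR] by blast
    have "separating c (t (w c)) = separating c (w c) - {t}"
      using separating_symdiff[OF c wc regular_image[OF tW wc]] t unfolding walls_def by auto
    hence "card (separating c ((t \<circ> w) c)) < card (separating c (w c))"
      using t(1) finite_separating card_Diff1_less by (metis comp_apply)
    moreover have "(t \<circ> w) x \<in> closed_chamber c" using fix_wx less.prems(3) by simp
    ultimately have "(t \<circ> w) x = x" using less.hyps comp_in_W[OF tW less.prems(1)] less.prems(2) by blast
    thus ?thesis using fix_wx by simp
  qed
qed

section \<open>Faces\<close>

definition face :: "'a \<Rightarrow> 'a set" where
  "face x = {y. same_face W x y}"

lemma same_face_iff: "same_face W x y \<longleftrightarrow> (\<forall>t\<in>Refl. sgn (y \<bullet> root t) = sgn (x \<bullet> root t))"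
proof
  assume h: "same_face W x y"
  show "\<forall>t\<in>Refl. sgn (y \<bullet> root t) = sgn (x \<bullet> root t)"
    using h is_reflection_along_root Refl_subset_W unfolding same_face_def by (metis subsetD)
next
  assume h: "\<forall>t\<in>Refl. sgn (y \<bullet> root t) = sgn (x \<bullet> root t)"
  show "same_face W x y" unfolding same_face_def
  proof (intro allI impI)
    fix v assume "\<exists>s\<in>W. is_reflection_along v s"
    then obtain s where s: "s \<in> W" "is_reflection_along v s" by blast
    hence sR: "s \<in> Refl" using is_reflection_along_imp_Refl by blast
    obtain k where "v = k *\<^sub>R root s" using root_unique[OF sR s(2)] by blast
    thus "sgn (x \<bullet> v) = sgn (y \<bullet> v)" using h sR by (simp add: sgn_mult)
  qed
qed

lemma mem_face_iff: "y \<in> face x \<longleftrightarrow> (\<forall>t\<in>Refl. sgn (y \<bullet> root t) = sgn (x \<bullet> root t))"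
  unfolding face_def using same_face_iff by simp

lemma faces_eq_range_face: "faces W = range face"
  unfolding faces_def face_def by auto

lemma face_self: "x \<in> face x"
  unfolding mem_face_iff by simp

lemma face_eq_if_mem:
  assumes "A \<in> faces W" "a \<in> A"
  shows "A = face a"
proof -
  obtain x where "A = face x" using assms(1) faces_eq_range_face by blast
  thus ?thesis using assms(2) unfolding mem_face_iff set_eq_iff by metis
qed

lemma face_nonempty: "A \<in> faces W \<Longrightarrow> \<exists>a. a \<in> A"
  using faces_eq_range_face face_self by blast

lemma image_face:
  assumes w: "w \<in> W"
  shows "w ` face x = face (w x)"
proof -
  have sgn_scaled: "sgn (k * a) = sgn (k * b) \<longleftrightarrow> sgn a = sgn b" if "k \<noteq> 0" for k a b :: real
    using that by (auto simp: sgn_mult sgn_zero_iff)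
  have mem: "w y \<in> face (w x) \<longleftrightarrow> y \<in> face x" for y
    unfolding mem_face_iff using W_preserves_scale_invariant[of w "\<lambda>a b. sgn a = sgn b" y x] w sgn_scaled
    by simp
  have "z \<in> face (w x) \<longleftrightarrow> inv w z \<in> face x" for z using mem[of "inv w z"] w by simp
  hence "face (w x) = w ` face x" by (rule eq_image_W_if_inv[OF w])
  thus ?thesis by simp
qed

lemma image_face_in_faces: "w \<in> W \<Longrightarrow> A \<in> faces W \<Longrightarrow> w ` A \<in> faces W"
  using image_face faces_eq_range_face by (metis rangeE rangeI)

lemma closed_closed_chamber: "closed (closed_chamber c)"
proof -
  have "closed_chamber c = (\<Inter>t\<in>Refl. {x. ((c \<bullet> root t) *\<^sub>R root t) \<bullet> x \<ge> 0})"
    unfolding closed_chamber_def by (auto simp: inner_commute mult.commute)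
  moreover have "closed (\<Inter>t\<in>Refl. {x. ((c \<bullet> root t) *\<^sub>R root t) \<bullet> x \<ge> 0})"
    by (intro closed_INT ballI closed_halfspace_ge)
  ultimately show ?thesis by simp
qed

lemma closure_face_subset_closed_chamber: "\<exists>c. regular c \<and> closure (face a) \<subseteq> closed_chamber c"
proof -
  obtain c where c: "regular c" "\<forall>t\<in>Refl. a \<bullet> root t \<noteq> 0 \<longrightarrow> sgn (c \<bullet> root t) = sgn (a \<bullet> root t)"
    using regular_near by blast
  have "face a \<subseteq> closed_chamber c"
  proof
    fix y assume y: "y \<in> face a"
    have "0 \<le> (y \<bullet> root t) * (c \<bullet> root t)" if t: "t \<in> Refl" for t
    proof (cases "a \<bullet> root t = 0")
      case True
      moreover have "sgn (y \<bullet> root t) = sgn (a \<bullet> root t)" using y t mem_face_iff by blast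
      ultimately have "y \<bullet> root t = 0" by (simp add: sgn_zero_iff)
      thus ?thesis by simp
    next
      case False
      hence "sgn (y \<bullet> root t) = sgn (c \<bullet> root t)" using y t c(2) unfolding mem_face_iff by simp
      thus ?thesis by (auto simp: sgn_if zero_le_mult_iff split: if_splits)
    qed
    thus "y \<in> closed_chamber c" unfolding closed_chamber_def by blast
  qed
  thus ?thesis using c(1) closure_minimal closed_closed_chamber by blast
qed

lemma closure_face_fundamental_domain:
  assumes "w \<in> W" "x \<in> closure (face a)" "w x \<in> closure (face a)"
  shows "w x = x"
proof -
  obtain c where c: "regular c" "closure (face a) \<subseteq> closed_chamber c"
    using closure_face_subset_closed_chamber by blast
  thus ?thesis using closed_chamber_fundamental_domain[OF c(1) assms(1)] assms(2,3) by (blast dest: subsetD)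
qed

lemma face_eq_if_conjugate_below:
  assumes "A \<in> faces W" "X \<in> faces W" "Y \<in> faces W" "X \<subseteq> closure A" "Y \<subseteq> closure A"
    and "g \<in> W" "Y = g ` X"
  shows "X = Y"
proof -
  obtain a where a: "a \<in> A" using face_nonempty assms(1) by blast
  hence A: "A = face a" using face_eq_if_mem assms(1) by blast
  obtain x where x: "x \<in> X" using face_nonempty assms(2) by blast
  have "g x \<in> Y" using x assms(7) by blast
  hence "g x = x" using closure_face_fundamental_domain[OF assms(6)] assms(4,5) x A by blast
  hence "x \<in> Y" using \<open>g x \<in> Y\<close> by simp
  thus ?thesis using face_eq_if_mem assms(2,3) x by metis
qed

lemma face_stabiliser_fixes:
  assumes "w \<in> W" "A \<in> faces W" "w ` A = A" "a \<in> A"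
  shows "w a = a"
proof -
  have "face a = A" using face_eq_if_mem assms(2,4) by simp
  hence "a \<in> closure (face a)" "w a \<in> closure (face a)" using assms(3,4) closure_subset by blast+
  thus ?thesis using closure_face_fundamental_domain[OF assms(1)] by blast
qed

lemma face_stabiliser_iff:
  assumes "w \<in> W" "A \<in> faces W"
  shows "w ` A = A \<longleftrightarrow> (\<forall>a\<in>A. w a = a)"
  using face_stabiliser_fixes[OF assms] by (auto simp: image_iff)

section \<open>Flats and strata\<close>

definition mirror :: "('a \<Rightarrow> 'a) \<Rightarrow> 'a set" where
  "mirror t = {x. x \<bullet> root t = 0}"

definition refls_containing :: "'a set \<Rightarrow> ('a \<Rightarrow> 'a) set" where
  "refls_containing X = {t \<in> Refl. X \<subseteq> mirror t}"

definition flat_hull :: "'a set \<Rightarrow> 'a set" where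
  "flat_hull X = \<Inter> (mirror ` refls_containing X)"

lemma hyps_eq_mirrors: "hyps W = mirror ` Refl"
proof
  show "hyps W \<subseteq> mirror ` Refl"
  proof
    fix H assume "H \<in> hyps W"
    then obtain v s where vs: "H = {x. x \<bullet> v = 0}" "s \<in> W" "is_reflection_along v s"
      unfolding hyps_def by blast
    hence sR: "s \<in> Refl" using is_reflection_along_imp_Refl by blast
    obtain k where "k \<noteq> 0" "v = k *\<^sub>R root s" using root_unique[OF sR vs(3)] by blast
    hence "H = mirror s" unfolding vs(1) mirror_def by auto
    thus "H \<in> mirror ` Refl" using sR by blast
  qed
  show "mirror ` Refl \<subseteq> hyps W"
    unfolding hyps_def mirror_def using is_reflection_along_root Refl_subset_W by blast
qed

lemma mirror_conjugate:
  assumes w: "w \<in> W" and t: "t \<in> Refl"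
  shows "mirror (conjugate w t) = w ` mirror t"
proof -
  obtain k where k: "k \<noteq> 0" "\<And>x. w x \<bullet> root (conjugate w t) = k * (x \<bullet> root t)"
    using inner_root_conjugate[OF w t] by blast
  have "x \<in> mirror (conjugate w t) \<longleftrightarrow> inv w x \<in> mirror t" for x
    using k(1) k(2)[of "inv w x"] w unfolding mirror_def by simp
  thus ?thesis by (rule eq_image_W_if_inv[OF w])
qed

lemma mem_flat_hull_iff: "z \<in> flat_hull X \<longleftrightarrow> (\<forall>t\<in>Refl. X \<subseteq> mirror t \<longrightarrow> z \<in> mirror t)"
  unfolding flat_hull_def refls_containing_def by blast

lemma subset_flat_hull: "X \<subseteq> flat_hull X"
  using mem_flat_hull_iff by blast

lemma flat_hull_in_flats: "flat_hull X \<in> flats W"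
proof -
  have "mirror ` refls_containing X \<subseteq> hyps W"
    unfolding hyps_eq_mirrors refls_containing_def by blast
  thus ?thesis unfolding flats_def flat_hull_def by blast
qed

lemma flat_hull_least:
  assumes "M \<in> flats W" "X \<subseteq> M"
  shows "flat_hull X \<subseteq> M"
proof -
  obtain F where F: "M = \<Inter> F" "F \<subseteq> mirror ` Refl"
    using assms(1) unfolding flats_def hyps_eq_mirrors by blast
  show ?thesis
  proof
    fix z assume z: "z \<in> flat_hull X"
    show "z \<in> M" unfolding F(1)
    proof
      fix H assume H: "H \<in> F"
      then obtain t where "t \<in> Refl" "H = mirror t" using F(2) by blast
      moreover have "X \<subseteq> H" using H assms(2) F(1) by blast
      ultimately show "z \<in> H" using z mem_flat_hull_iff by blast
    qed
  qed
qed

lemma subspace_flat_hull: "subspace (flat_hull X)"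
  unfolding flat_hull_def mirror_def by (rule subspace_Inter) (auto intro: subspace_hyperplane2)

lemma closed_flat_hull: "closed (flat_hull X)"
proof -
  have "closed (mirror t)" for t
    using closed_hyperplane[of "root t" 0] unfolding mirror_def by (simp add: inner_commute)
  thus ?thesis unfolding flat_hull_def by (intro closed_Inter) blast
qed

lemma flat_hull_subset_if_subset_closure:
  assumes "X \<subseteq> closure Y"
  shows "flat_hull X \<subseteq> flat_hull Y"
proof -
  have "closure Y \<subseteq> flat_hull Y" using closure_minimal subset_flat_hull closed_flat_hull by blast
  hence "X \<subseteq> flat_hull Y" using assms by blast
  thus ?thesis by (rule flat_hull_least[OF flat_hull_in_flats])
qed

lemma refls_containing_image:
  assumes w: "w \<in> W"
  shows "refls_containing (w ` X) = conjugate w ` refls_containing X"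
proof (rule eq_conjugate_image_if[OF w])
  show "refls_containing (w ` X) \<subseteq> Refl" "refls_containing X \<subseteq> Refl"
    unfolding refls_containing_def by blast+
  fix t assume t: "t \<in> Refl"
  show "conjugate w t \<in> refls_containing (w ` X) \<longleftrightarrow> t \<in> refls_containing X"
    using t mirror_conjugate[OF w t] conjugate_in_Refl[OF w t] inj_W[OF w]
    unfolding refls_containing_def by (simp add: inj_image_subset_iff)
qed

lemma image_flat_hull:
  assumes w: "w \<in> W"
  shows "w ` flat_hull X = flat_hull (w ` X)"
proof -
  have "w ` flat_hull X = (\<Inter>t\<in>refls_containing X. w ` mirror t)"
    unfolding flat_hull_def using bij_image_INT[OF bij_W[OF w]] by simp
  also have "\<dots> = (\<Inter>t\<in>refls_containing X. mirror (conjugate w t))"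
    using mirror_conjugate[OF w] unfolding refls_containing_def by simp
  also have "\<dots> = flat_hull (w ` X)"
    unfolding flat_hull_def refls_containing_image[OF w] by (simp add: image_image)
  finally show ?thesis .
qed

lemma refls_containing_face:
  assumes "A \<in> faces W" "a \<in> A"
  shows "refls_containing A = refls_containing {a}"
proof -
  have "x \<in> mirror t \<longleftrightarrow> a \<in> mirror t" if "x \<in> A" "t \<in> Refl" for x t
  proof -
    have "sgn (x \<bullet> root t) = sgn (a \<bullet> root t)" using that face_eq_if_mem[OF assms] mem_face_iff by blast
    thus ?thesis unfolding mirror_def mem_Collect_eq by (metis sgn_zero_iff)
  qed
  hence "A \<subseteq> mirror t \<longleftrightarrow> a \<in> mirror t" if "t \<in> Refl" for t using that assms(2) by blast
  thus ?thesis unfolding refls_containing_def by auto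
qed

lemma refls_containing_Un: "refls_containing (X \<union> Y) = refls_containing X \<inter> refls_containing Y"
  unfolding refls_containing_def by auto

lemma flat_hull_Un_faces:
  assumes "A \<in> faces W" "B \<in> faces W" "a \<in> A" "b \<in> B"
  shows "flat_hull (A \<union> B) = flat_hull {a, b}"
  using refls_containing_Un[of A B] refls_containing_Un[of "{a}" "{b}"]
    refls_containing_face[OF assms(1,3)] refls_containing_face[OF assms(2,4)]
  unfolding flat_hull_def by (simp add: insert_is_Un[of a "{b}"])

lemma generic_part_iff:
  assumes L: "L \<in> flats W"
  shows "(x, y) \<in> generic_part W L \<longleftrightarrow> L = flat_hull {x, y}"
proof
  assume "(x, y) \<in> generic_part W L"
  hence "(x, y) \<in> L \<times> L \<and> \<not> (\<exists>M\<in>flats W. M \<times> M \<subset> L \<times> L \<and> (x, y) \<in> M \<times> M)"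
    unfolding generic_part_def by (rule CollectD)
  hence "(x, y) \<in> L \<times> L" and h: "\<not> (\<exists>M\<in>flats W. M \<times> M \<subset> L \<times> L \<and> (x, y) \<in> M \<times> M)"
    by (rule conjunct1, rule conjunct2)
  hence xy: "x \<in> L" "y \<in> L" by simp_all
  let ?M = "flat_hull {x, y}"
  have sub: "?M \<subseteq> L" using flat_hull_least[OF L, of "{x, y}"] xy by simp
  have "(x, y) \<in> ?M \<times> ?M" using subset_flat_hull[of "{x, y}"] by blast
  hence "\<not> ?M \<times> ?M \<subset> L \<times> L" using h flat_hull_in_flats[of "{x, y}"] by blast
  moreover have "?M \<times> ?M \<subseteq> L \<times> L" using sub by (intro Sigma_mono) auto
  ultimately have eq: "?M \<times> ?M = L \<times> L" by (simp add: psubset_eq)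
  show "L = ?M"
  proof (rule equalityI[OF subsetI sub])
    fix z assume "z \<in> L"
    hence "(z, z) \<in> ?M \<times> ?M" using eq by simp
    thus "z \<in> ?M" by simp
  qed
next
  assume L_eq: "L = flat_hull {x, y}"
  have "(x, y) \<in> L \<times> L" using L_eq subset_flat_hull[of "{x, y}"] by blast
  moreover have "\<not> (\<exists>M\<in>flats W. M \<times> M \<subset> L \<times> L \<and> (x, y) \<in> M \<times> M)"
  proof
    assume "\<exists>M\<in>flats W. M \<times> M \<subset> L \<times> L \<and> (x, y) \<in> M \<times> M"
    then obtain M where M: "M \<in> flats W" "M \<times> M \<subset> L \<times> L" "x \<in> M" "y \<in> M" by blast
    have "L \<subseteq> M" using flat_hull_least[OF M(1), of "{x, y}"] M(3,4) L_eq by simp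
    hence "L \<times> L \<subseteq> M \<times> M" by (intro Sigma_mono) auto
    thus False using M(2) by (metis psubsetE)
  qed
  ultimately have "(x, y) \<in> L \<times> L \<and> \<not> (\<exists>M\<in>flats W. M \<times> M \<subset> L \<times> L \<and> (x, y) \<in> M \<times> M)"
    by (rule conjI)
  thus "(x, y) \<in> generic_part W L" unfolding generic_part_def by (rule CollectI)
qed

lemma quot_image_subset:
  assumes w: "w \<in> W"
  shows "quot W (w x, w y) \<subseteq> quot W (x, y)"
proof
  fix p assume "p \<in> quot W (w x, w y)"
  then obtain u where u: "u \<in> W" "p = (u (w x), u (w y))" unfolding quot_def by auto
  have "(u \<circ> w) \<in> W" using comp_in_W[OF u(1) w] .
  thus "p \<in> quot W (x, y)" unfolding quot_def u(2) by (rule rev_image_eqI) simp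
qed

lemma quot_image:
  assumes w: "w \<in> W"
  shows "quot W (w x, w y) = quot W (x, y)"
proof (rule subset_antisym)
  show "quot W (w x, w y) \<subseteq> quot W (x, y)" by (rule quot_image_subset[OF w])
  show "quot W (x, y) \<subseteq> quot W (w x, w y)"
    using quot_image_subset[OF inv_in_W[OF w], of "w x" "w y"] w by simp
qed

lemma quot_in_stratum_iff:
  assumes L: "L \<in> flats W"
  shows "quot W (x, y) \<in> quot W ` generic_part W L \<longleftrightarrow> (\<exists>w\<in>W. L = w ` flat_hull {x, y})"
proof
  assume "quot W (x, y) \<in> quot W ` generic_part W L"
  then obtain z where z: "z \<in> generic_part W L" "quot W (x, y) = quot W z" by auto
  have "z \<in> quot W z" unfolding quot_def using id_in_W by (rule rev_image_eqI) simp
  then obtain w where w: "w \<in> W" "z = (w x, w y)" using z(2) unfolding quot_def by auto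
  hence "L = flat_hull (w ` {x, y})" using z(1) generic_part_iff[OF L] by simp
  thus "\<exists>w\<in>W. L = w ` flat_hull {x, y}" using image_flat_hull[OF w(1)] w(1) by metis
next
  assume "\<exists>w\<in>W. L = w ` flat_hull {x, y}"
  then obtain w where w: "w \<in> W" "L = flat_hull {w x, w y}" using image_flat_hull by auto
  hence "(w x, w y) \<in> generic_part W L" using generic_part_iff[OF L] by blast
  hence "quot W (w x, w y) \<in> quot W ` generic_part W L" by (rule imageI)
  thus "quot W (x, y) \<in> quot W ` generic_part W L" using quot_image[OF w(1)] by simp
qed

section \<open>Stabilisers of pairs of faces\<close>

text \<open>Pushing \<open>q\<close> slightly towards \<open>z\<close> stays in the face of \<open>q\<close>, which \<open>w\<close> maps to itself.\<close>
lemma fixes_flat_hull_of_fixed_point: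
  assumes w: "w \<in> W" and q: "w q = q" and z: "z \<in> flat_hull {q}"
  shows "w z = z"
proof -
  let ?T = "{t \<in> Refl. q \<bullet> root t \<noteq> 0}"
  have "finite ?T" "\<forall>t\<in>?T. q \<bullet> root t \<noteq> 0" using finite_Refl by simp_all
  then obtain \<epsilon> where \<epsilon>: "\<epsilon> > 0"
    "\<And>\<delta>. \<bar>\<delta>\<bar> < \<epsilon> \<Longrightarrow> \<forall>t\<in>?T. sgn ((q + \<delta> *\<^sub>R z) \<bullet> root t) = sgn (q \<bullet> root t)"
    using small_perturbation_keeps_signs by blast
  define p where "p = q + (\<epsilon> / 2) *\<^sub>R z"
  have "sgn (p \<bullet> root t) = sgn (q \<bullet> root t)" if t: "t \<in> Refl" for t
  proof (cases "q \<bullet> root t = 0")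
    case True
    hence "z \<bullet> root t = 0" using z t unfolding mem_flat_hull_iff mirror_def by simp
    thus ?thesis using True unfolding p_def by (simp add: inner_add_left)
  next
    case False
    thus ?thesis using \<epsilon>(2)[of "\<epsilon> / 2"] \<epsilon>(1) t unfolding p_def by simp
  qed
  hence p: "p \<in> face q" unfolding mem_face_iff by blast
  hence "w p \<in> face q" using image_face[OF w, of q] q by (metis imageI)
  hence "w p = p" using closure_face_fundamental_domain[OF w] p closure_subset by blast
  moreover have "w p = q + (\<epsilon> / 2) *\<^sub>R w z"
    unfolding p_def using linear_W[OF w] q by (simp add: linear_add linear_scale)
  ultimately show ?thesis unfolding p_def using \<epsilon>(1) by simp
qed

lemma exists_generic_point_of_pair: "\<exists>l. refls_containing {a + l *\<^sub>R b} = refls_containing {a, b}"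
proof -
  have "finite ((\<lambda>t. - (a \<bullet> root t) / (b \<bullet> root t)) ` Refl)" using finite_Refl by simp
  then obtain l :: real where l: "l \<notin> (\<lambda>t. - (a \<bullet> root t) / (b \<bullet> root t)) ` Refl"
    using ex_new_if_finite[OF infinite_UNIV_char_0] by blast
  have "(a + l *\<^sub>R b) \<bullet> root t = 0 \<longleftrightarrow> a \<bullet> root t = 0 \<and> b \<bullet> root t = 0" if t: "t \<in> Refl" for t
  proof (cases "b \<bullet> root t = 0")
    case True
    thus ?thesis by (simp add: inner_add_left)
  next
    case False
    have "(a + l *\<^sub>R b) \<bullet> root t \<noteq> 0"
    proof
      assume "(a + l *\<^sub>R b) \<bullet> root t = 0"
      hence "l = - (a \<bullet> root t) / (b \<bullet> root t)" using False by (simp add: inner_add_left field_simps)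
      thus False using l t by blast
    qed
    thus ?thesis using False by simp
  qed
  hence "refls_containing {a + l *\<^sub>R b} = refls_containing {a, b}"
    unfolding refls_containing_def mirror_def by auto
  thus ?thesis by blast
qed

lemma fixes_flat_hull_of_fixed_pair:
  assumes w: "w \<in> W" and "w a = a" "w b = b" and z: "z \<in> flat_hull {a, b}"
  shows "w z = z"
proof -
  obtain l where l: "refls_containing {a + l *\<^sub>R b} = refls_containing {a, b}"
    using exists_generic_point_of_pair by blast
  have "w (a + l *\<^sub>R b) = a + l *\<^sub>R b" using linear_W[OF w] assms(2,3) by (simp add: linear_add linear_scale)
  moreover have "z \<in> flat_hull {a + l *\<^sub>R b}" using z l unfolding flat_hull_def by simp
  ultimately show ?thesis using fixes_flat_hull_of_fixed_point[OF w] by blast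
qed

text \<open>Stabilisers of faces fix them pointwise, and the pointwise fixer of a pair of faces is the
  pointwise fixer of the flat they span.\<close>
lemma pair_stabiliser_subset_iff:
  assumes faces: "A \<in> faces W" "B \<in> faces W" "A' \<in> faces W" "B' \<in> faces W"
  shows "(\<forall>w\<in>W. w ` A' = A' \<and> w ` B' = B' \<longrightarrow> w ` A = A \<and> w ` B = B) \<longleftrightarrow> A \<union> B \<subseteq> flat_hull (A' \<union> B')"
proof
  assume stab: "\<forall>w\<in>W. w ` A' = A' \<and> w ` B' = B' \<longrightarrow> w ` A = A \<and> w ` B = B"
  show "A \<union> B \<subseteq> flat_hull (A' \<union> B')"
  proof
    fix z assume z: "z \<in> A \<union> B"
    show "z \<in> flat_hull (A' \<union> B')" unfolding mem_flat_hull_iff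
    proof (intro ballI impI)
      fix t assume t: "t \<in> Refl" "A' \<union> B' \<subseteq> mirror t"
      have tW: "t \<in> W" using t(1) Refl_subset_W by blast
      have "\<forall>x\<in>A' \<union> B'. t x = x" using t Refl_fixed_iff unfolding mirror_def by blast
      hence "t ` A' = A'" "t ` B' = B'" using face_stabiliser_iff[OF tW] faces(3,4) by auto
      hence "t ` A = A" "t ` B = B" using stab tW by blast+
      hence "t z = z" using face_stabiliser_fixes[OF tW] faces(1,2) z by blast
      thus "z \<in> mirror t" using Refl_fixed_iff[OF t(1)] unfolding mirror_def by simp
    qed
  qed
next
  assume sub: "A \<union> B \<subseteq> flat_hull (A' \<union> B')"
  show "\<forall>w\<in>W. w ` A' = A' \<and> w ` B' = B' \<longrightarrow> w ` A = A \<and> w ` B = B"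
  proof (intro ballI impI)
    fix w assume w: "w \<in> W" and stab: "w ` A' = A' \<and> w ` B' = B'"
    obtain a' b' where ab: "a' \<in> A'" "b' \<in> B'" using face_nonempty faces(3,4) by metis
    have "w a' = a'" "w b' = b'" using face_stabiliser_fixes[OF w] faces(3,4) stab ab by blast+
    hence "\<forall>z\<in>A \<union> B. w z = z"
      using fixes_flat_hull_of_fixed_pair[OF w] sub flat_hull_Un_faces[OF faces(3,4) ab] by blast
    thus "w ` A = A \<and> w ` B = B" using face_stabiliser_iff[OF w] faces(1,2) by blast
  qed
qed

lemma flat_hull_Un_subset_if_closure:
  assumes "A' \<subseteq> closure A" "B' \<subseteq> closure B"
  shows "flat_hull (A' \<union> B') \<subseteq> flat_hull (A \<union> B)"
  using assms closure_Un[of A B] by (intro flat_hull_subset_if_subset_closure) blast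

lemma subset_flat_hull_iff_eq:
  assumes "A' \<subseteq> closure A" "B' \<subseteq> closure B"
  shows "A \<union> B \<subseteq> flat_hull (A' \<union> B') \<longleftrightarrow> flat_hull (A' \<union> B') = flat_hull (A \<union> B)"
proof
  assume "A \<union> B \<subseteq> flat_hull (A' \<union> B')"
  hence "flat_hull (A \<union> B) \<subseteq> flat_hull (A' \<union> B')" by (rule flat_hull_least[OF flat_hull_in_flats])
  thus "flat_hull (A' \<union> B') = flat_hull (A \<union> B)" using flat_hull_Un_subset_if_closure[OF assms] by blast
next
  assume "flat_hull (A' \<union> B') = flat_hull (A \<union> B)"
  thus "A \<union> B \<subseteq> flat_hull (A' \<union> B')" using subset_flat_hull by metis
qed

section \<open>Anodyne inequalities\<close>

lemma U_xi_pair_orbit: "U_xi W (pair_orbit W (A, B)) = quot W ` {(b, a) | a b. a \<in> A \<and> b \<in> B}"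
proof -
  have "(id ` A, id ` B) \<in> pair_orbit W (A, B)" unfolding pair_orbit_def using id_in_W by (rule rev_image_eqI) simp
  hence "(SOME q. q \<in> pair_orbit W (A, B)) \<in> pair_orbit W (A, B)" by (rule someI)
  then obtain g where g: "g \<in> W" "(SOME q. q \<in> pair_orbit W (A, B)) = (g ` A, g ` B)"
    unfolding pair_orbit_def by auto
  have "quot W ` {(b, a) | a b. a \<in> g ` A \<and> b \<in> g ` B} = quot W ` {(b, a) | a b. a \<in> A \<and> b \<in> B}"
    using quot_image[OF g(1)] by (auto simp: image_iff)
  thus ?thesis unfolding U_xi_def Let_def g(2) by simp
qed

lemma U_xi_subset_stratum_iff:
  assumes faces: "A \<in> faces W" "B \<in> faces W" and L: "L \<in> flats W"
  shows "U_xi W (pair_orbit W (A, B)) \<subseteq> quot W ` generic_part W L \<longleftrightarrow> (\<exists>w\<in>W. L = w ` flat_hull (A \<union> B))"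
proof -
  have key: "quot W (b, a) \<in> quot W ` generic_part W L \<longleftrightarrow> (\<exists>w\<in>W. L = w ` flat_hull (A \<union> B))"
    if "a \<in> A" "b \<in> B" for a b
    using quot_in_stratum_iff[OF L, of b a] flat_hull_Un_faces[OF faces that] by (simp add: insert_commute)
  obtain a b where "a \<in> A" "b \<in> B" using face_nonempty faces by metis
  thus ?thesis unfolding U_xi_pair_orbit using key by blast
qed

lemma anodyne_iff_flat_hull_eq:
  assumes faces: "A \<in> faces W" "B \<in> faces W" "A' \<in> faces W" "B' \<in> faces W"
    and below: "A' \<subseteq> closure A" "B' \<subseteq> closure B"
  shows "anodyne W (pair_orbit W (A, B)) (pair_orbit W (A', B')) \<longleftrightarrow>
    flat_hull (A' \<union> B') = flat_hull (A \<union> B)"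
proof
  assume "anodyne W (pair_orbit W (A, B)) (pair_orbit W (A', B'))"
  then obtain L where L: "L \<in> flats W"
    "U_xi W (pair_orbit W (A, B)) \<subseteq> quot W ` generic_part W L"
    "U_xi W (pair_orbit W (A', B')) \<subseteq> quot W ` generic_part W L"
    unfolding anodyne_def strata0_def by blast
  obtain w1 where w1: "w1 \<in> W" "L = w1 ` flat_hull (A \<union> B)"
    using U_xi_subset_stratum_iff[OF faces(1,2) L(1)] L(2) by blast
  obtain w2 where w2: "w2 \<in> W" "L = w2 ` flat_hull (A' \<union> B')"
    using U_xi_subset_stratum_iff[OF faces(3,4) L(1)] L(3) by blast
  define h where "h = inv w2 \<circ> w1"
  have hW: "h \<in> W" unfolding h_def using comp_in_W inv_in_W w1(1) w2(1) by blast
  have h: "h ` flat_hull (A \<union> B) = flat_hull (A' \<union> B')"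
    unfolding h_def image_comp[symmetric] w1(2)[symmetric] w2(2) using w2(1) by simp
  hence "h ` flat_hull (A \<union> B) \<subseteq> flat_hull (A \<union> B)"
    using flat_hull_Un_subset_if_closure[OF below] by simp
  hence "h ` flat_hull (A \<union> B) = flat_hull (A \<union> B)"
    by (rule linear_inj_image_subspace_eq[OF linear_W[OF hW] inj_W[OF hW] subspace_flat_hull])
  with h show "flat_hull (A' \<union> B') = flat_hull (A \<union> B)" by simp
next
  assume eq: "flat_hull (A' \<union> B') = flat_hull (A \<union> B)"
  let ?L = "flat_hull (A \<union> B)"
  have "U_xi W (pair_orbit W (X, Y)) \<subseteq> quot W ` generic_part W ?L"
    if "X \<in> faces W" "Y \<in> faces W" "flat_hull (X \<union> Y) = ?L" for X Y
    using U_xi_subset_stratum_iff[OF that(1,2) flat_hull_in_flats] that(3) id_in_W by force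
  hence "U_xi W (pair_orbit W (A, B)) \<subseteq> quot W ` generic_part W ?L"
    "U_xi W (pair_orbit W (A', B')) \<subseteq> quot W ` generic_part W ?L"
    using faces eq by blast+
  moreover have "quot W ` generic_part W ?L \<in> strata0 W"
    unfolding strata0_def using flat_hull_in_flats by blast
  ultimately show "anodyne W (pair_orbit W (A, B)) (pair_orbit W (A', B'))"
    unfolding anodyne_def by blast
qed

section \<open>Orbits of pairs of faces\<close>

lemma pair_orbit_mem: "w \<in> W \<Longrightarrow> (w ` A, w ` B) \<in> pair_orbit W (A, B)"
  unfolding pair_orbit_def by (rule rev_image_eqI) simp_all

lemma pair_orbitE:
  assumes "q \<in> pair_orbit W (A, B)"
  obtains w where "w \<in> W" "q = (w ` A, w ` B)"
  using assms unfolding pair_orbit_def by auto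

lemma pair_orbit_image:
  assumes g: "g \<in> W"
  shows "pair_orbit W (g ` A, g ` B) = pair_orbit W (A, B)"
proof
  show "pair_orbit W (g ` A, g ` B) \<subseteq> pair_orbit W (A, B)"
  proof
    fix q assume "q \<in> pair_orbit W (g ` A, g ` B)"
    then obtain w where w: "w \<in> W" "q = (w ` g ` A, w ` g ` B)" by (rule pair_orbitE)
    thus "q \<in> pair_orbit W (A, B)" using pair_orbit_mem[OF comp_in_W[OF w(1) g]] by (simp add: image_comp)
  qed
  show "pair_orbit W (A, B) \<subseteq> pair_orbit W (g ` A, g ` B)"
  proof
    fix q assume "q \<in> pair_orbit W (A, B)"
    then obtain w where w: "w \<in> W" "q = (w ` A, w ` B)" by (rule pair_orbitE)
    have "(w \<circ> inv g) ` g ` A = w ` A" "(w \<circ> inv g) ` g ` B = w ` B"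
      using g by (simp_all only: image_comp[symmetric] inv_image_image_W)
    thus "q \<in> pair_orbit W (g ` A, g ` B)"
      using pair_orbit_mem[OF comp_in_W[OF w(1) inv_in_W[OF g]], of "g ` A" "g ` B"] w(2) by simp
  qed
qed

lemma image_subset_closure_image: "w \<in> W \<Longrightarrow> X \<subseteq> closure Y \<Longrightarrow> w ` X \<subseteq> closure (w ` Y)"
  using closure_linear_image_subset[OF linear_W] by blast

text \<open>The value of \<open>proj_xi\<close> is well defined because two pairs of faces below \<open>(w A, w B)\<close> in the
  same orbit coincide, the closed chamber being a strict fundamental domain.\<close>
lemma proj_xi_pair_orbit:
  assumes faces: "A \<in> faces W" "B \<in> faces W" "A' \<in> faces W" "B' \<in> faces W"
    and below: "A' \<subseteq> closure A" "B' \<subseteq> closure B" and w: "w \<in> W"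
  shows "proj_xi (pair_orbit W (A', B')) (w ` A, w ` B) = (w ` A', w ` B')"
  unfolding proj_xi_def face_le_def
proof (rule the_equality)
  show "(w ` A', w ` B') \<in> pair_orbit W (A', B') \<and> fst (w ` A', w ` B') \<subseteq> closure (fst (w ` A, w ` B))
      \<and> snd (w ` A', w ` B') \<subseteq> closure (snd (w ` A, w ` B))"
    using pair_orbit_mem[OF w] image_subset_closure_image[OF w] below by simp
next
  fix q assume q: "q \<in> pair_orbit W (A', B') \<and> fst q \<subseteq> closure (fst (w ` A, w ` B))
      \<and> snd q \<subseteq> closure (snd (w ` A, w ` B))"
  then obtain u where u: "u \<in> W" "q = (u ` A', u ` B')" by (blast elim: pair_orbitE)
  define h where "h = inv w \<circ> u"
  have hW: "h \<in> W" unfolding h_def using comp_in_W inv_in_W[OF w] u(1) by blast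
  have h_img: "h ` X = inv w ` u ` X" for X unfolding h_def by (simp add: image_comp)
  have fixed: "h ` X' = X'"
    if X: "X \<in> faces W" "X' \<in> faces W" "X' \<subseteq> closure X" "u ` X' \<subseteq> closure (w ` X)" for X X'
  proof -
    have "h ` X' \<subseteq> closure (inv w ` w ` X)"
      unfolding h_img using image_subset_closure_image[OF inv_in_W[OF w] X(4)] .
    hence "h ` X' \<subseteq> closure X" using w by simp
    thus ?thesis using face_eq_if_conjugate_below[OF X(1,2) image_face_in_faces[OF hW X(2)] X(3) _ hW]
      by simp
  qed
  have "u ` X = w ` h ` X" for X unfolding h_img using w by simp
  thus "q = (w ` A', w ` B')"
    using fixed[OF faces(1,3) below(1)] fixed[OF faces(2,4) below(2)] q u(2) by simp
qed

lemma proj_xi_image_pair_orbit: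
  assumes faces: "A \<in> faces W" "B \<in> faces W" "A' \<in> faces W" "B' \<in> faces W"
    and below: "A' \<subseteq> closure A" "B' \<subseteq> closure B"
  shows "proj_xi (pair_orbit W (A', B')) ` pair_orbit W (A, B) = pair_orbit W (A', B')"
proof
  show "proj_xi (pair_orbit W (A', B')) ` pair_orbit W (A, B) \<subseteq> pair_orbit W (A', B')"
  proof
    fix q assume "q \<in> proj_xi (pair_orbit W (A', B')) ` pair_orbit W (A, B)"
    then obtain w where "w \<in> W" "q = proj_xi (pair_orbit W (A', B')) (w ` A, w ` B)"
      by (blast elim: pair_orbitE)
    thus "q \<in> pair_orbit W (A', B')" using proj_xi_pair_orbit[OF faces below] pair_orbit_mem by simp
  qed
  show "pair_orbit W (A', B') \<subseteq> proj_xi (pair_orbit W (A', B')) ` pair_orbit W (A, B)"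
  proof
    fix q assume "q \<in> pair_orbit W (A', B')"
    then obtain w where w: "w \<in> W" "q = (w ` A', w ` B')" by (rule pair_orbitE)
    hence "q = proj_xi (pair_orbit W (A', B')) (w ` A, w ` B)" using proj_xi_pair_orbit[OF faces below] by simp
    thus "q \<in> proj_xi (pair_orbit W (A', B')) ` pair_orbit W (A, B)" using pair_orbit_mem[OF w(1)] by blast
  qed
qed

lemma inj_on_proj_xi_iff:
  assumes faces: "A \<in> faces W" "B \<in> faces W" "A' \<in> faces W" "B' \<in> faces W"
    and below: "A' \<subseteq> closure A" "B' \<subseteq> closure B"
  shows "inj_on (proj_xi (pair_orbit W (A', B'))) (pair_orbit W (A, B)) \<longleftrightarrow>
    (\<forall>w\<in>W. w ` A' = A' \<and> w ` B' = B' \<longrightarrow> w ` A = A \<and> w ` B = B)"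
proof
  let ?p = "proj_xi (pair_orbit W (A', B'))"
  note p = proj_xi_pair_orbit[OF faces below]
  assume inj: "inj_on ?p (pair_orbit W (A, B))"
  show "\<forall>w\<in>W. w ` A' = A' \<and> w ` B' = B' \<longrightarrow> w ` A = A \<and> w ` B = B"
  proof (intro ballI impI)
    fix w assume w: "w \<in> W" "w ` A' = A' \<and> w ` B' = B'"
    have "?p (w ` A, w ` B) = ?p (id ` A, id ` B)" using p[OF w(1)] p[OF id_in_W] w(2) by simp
    hence "(w ` A, w ` B) = (id ` A, id ` B)"
      using inj pair_orbit_mem[OF w(1)] pair_orbit_mem[OF id_in_W] by (blast dest: inj_onD)
    thus "w ` A = A \<and> w ` B = B" by simp
  qed
next
  let ?p = "proj_xi (pair_orbit W (A', B'))"
  note p = proj_xi_pair_orbit[OF faces below]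
  assume stab: "\<forall>w\<in>W. w ` A' = A' \<and> w ` B' = B' \<longrightarrow> w ` A = A \<and> w ` B = B"
  show "inj_on ?p (pair_orbit W (A, B))"
  proof (rule inj_onI)
    fix q r assume "q \<in> pair_orbit W (A, B)" "r \<in> pair_orbit W (A, B)" and eq: "?p q = ?p r"
    then obtain w u where w: "w \<in> W" "q = (w ` A, w ` B)" and u: "u \<in> W" "r = (u ` A, u ` B)"
      by (blast elim: pair_orbitE)
    define h where "h = inv u \<circ> w"
    have hW: "h \<in> W" unfolding h_def using comp_in_W inv_in_W[OF u(1)] w(1) by blast
    have h_img: "h ` X = inv u ` w ` X" for X unfolding h_def by (simp add: image_comp)
    have "w ` A' = u ` A'" "w ` B' = u ` B'" using eq p[OF w(1)] p[OF u(1)] w(2) u(2) by simp_all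
    hence "h ` A' = A'" "h ` B' = B'" unfolding h_img using u(1) by simp_all
    hence "h ` A = A" "h ` B = B" using stab hW by blast+
    hence "w ` A = u ` A" "w ` B = u ` B" unfolding h_img using u(1) by (metis image_inv_image_W)+
    thus "q = r" using w(2) u(2) by simp
  qed
qed

lemma pair_orbit_proposition:
  assumes faces: "A \<in> faces W" "B \<in> faces W" "A' \<in> faces W" "B' \<in> faces W"
    and below: "A' \<subseteq> closure A" "B' \<subseteq> closure B"
    and m: "m = pair_orbit W (A, B)" and n: "n = pair_orbit W (A', B')"
  shows "(anodyne W m n \<longleftrightarrow> card m = card n) \<and> (card m = card n \<longleftrightarrow> bij_betw (proj_xi n) m n)"
proof -
  have "finite m" unfolding m pair_orbit_def using finite_W by simp
  moreover have onto: "proj_xi n ` m = n" unfolding m n using proj_xi_image_pair_orbit[OF faces below] .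
  ultimately have card: "card m = card n \<longleftrightarrow> inj_on (proj_xi n) m"
    using inj_on_iff_eq_card by metis
  have "anodyne W m n \<longleftrightarrow> flat_hull (A' \<union> B') = flat_hull (A \<union> B)"
    unfolding m n by (rule anodyne_iff_flat_hull_eq[OF faces below])
  also have "\<dots> \<longleftrightarrow> A \<union> B \<subseteq> flat_hull (A' \<union> B')"
    using subset_flat_hull_iff_eq[OF below] by simp
  also have "\<dots> \<longleftrightarrow> (\<forall>w\<in>W. w ` A' = A' \<and> w ` B' = B' \<longrightarrow> w ` A = A \<and> w ` B = B)"
    using pair_stabiliser_subset_iff[OF faces] by simp
  also have "\<dots> \<longleftrightarrow> inj_on (proj_xi n) m"
    unfolding m n using inj_on_proj_xi_iff[OF faces below] by simp
  finally show ?thesis using card onto unfolding bij_betw_def by blast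
qed

end

theorem proposition1p6:
  fixes W :: "('a::euclidean_space \<Rightarrow> 'a) set"
    and m n :: "('a set \<times> 'a set) set"
  assumes "finite_refl_group W"
    and "m \<in> Xi W" and "n \<in> Xi W"
    and "xi_ge W m n"
  shows "(anodyne W m n \<longleftrightarrow> card m = card n)
    \<and> (card m = card n \<longleftrightarrow> bij_betw (proj_xi n) m n)"
proof -
  interpret finite_reflection_group W using assms(1) by unfold_locales
  obtain A0 B0 A0' B0' where faces0: "A0 \<in> faces W" "B0 \<in> faces W" "A0' \<in> faces W" "B0' \<in> faces W"
    and m0: "m = pair_orbit W (A0, B0)" and n0: "n = pair_orbit W (A0', B0')"
    using assms(2,3) unfolding Xi_def by blast
  obtain A B A' B' where AB: "(A, B) \<in> m" and AB': "(A', B') \<in> n"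
    and below: "A' \<subseteq> closure A" "B' \<subseteq> closure B"
    using assms(4) unfolding xi_ge_def face_le_def by blast
  obtain g g' where g: "g \<in> W" "A = g ` A0" "B = g ` B0" and g': "g' \<in> W" "A' = g' ` A0'" "B' = g' ` B0'"
    using AB AB' unfolding m0 n0 by (auto elim!: pair_orbitE)
  have "A \<in> faces W" "B \<in> faces W" "A' \<in> faces W" "B' \<in> faces W"
    using image_face_in_faces g g' faces0 by simp_all
  moreover have "m = pair_orbit W (A, B)" "n = pair_orbit W (A', B')"
    using m0 n0 g g' pair_orbit_image by simp_all
  ultimately show ?thesis using pair_orbit_proposition below by blast
qed

end
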